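(* Let $G$ be a discrete-time LTI system with $m$ inputs and $p$ outputs whose minimal realizations have state dimension $n$. Let $L\ge n$ and $\xi\in\mathbb{N}$, $\xi\ge1$, be integers, and set $\tilde L=\xi L+(1-\xi)n$. Suppose $\{u_k,y_k\}_{k=0}^{N-1}$ is a trajectory of $G$ and $u$ is persistently exciting of order $L+n$. Then $\{\bar u_k,\bar y_k\}_{k=0}^{\tilde L-1}$ is a trajectory of $G$ if and only if there exist $\alpha^1,\dots,\alpha^\xi\in\mathbb{R}^{N-L+1}$ such that $$\begin{bmatrix}H_L(u)&0\\0&I_{\xi-1}\otimes H_{L-n}(u_{[n,N-1]})\\ H_L(y)&0\\0&I_{\xi-1}\otimes H_{L-n}(y_{[n,N-1]})\end{bmatrix}\begin{bmatrix}\alpha^1\\ \vdots\\ \alpha^\xi\end{bmatrix}=\begin{bmatrix}\bar u_{[0,\tilde L-1]}\\ \bar y_{[0,\tilde L-1]}\end{bmatrix}$$ and, for all $i\in\{1,\dots,\xi-1\}$, $$H_n(u_{[L-n,N-1]})\alpha^i=H_n(u_{[0,N-L+n-1]})\alpha^{i+1},\qquad H_n(y_{[L-n,N-1]})\alpha^i=H_n(y_{[0,N-L+n-1]})\alpha^{i+1}.$$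
   Context: For a sequence $\{x_k\}_{k=0}^{N-1}$ with $x_k\in\mathbb{R}^d$ and $1\le L\le N$, the Hankel matrix $H_L(x)\in\mathbb{R}^{dL\times(N-L+1)}$ is the matrix whose $(i,j)$ block (block rows $i=0,\dots,L-1$, columns $j=0,\dots,N-L$) is $x_{i+j}$. For $a\le b$, $x_{[a,b]}$ denotes the stacked vector $(x_a^\top,\dots,x_b^\top)^\top$; when used as the argument of a Hankel matrix, $x_{[a,b]}$ denotes the subsequence $\{x_{a+k}\}_{k=0}^{b-a}$, so that e.g. $H_{L-n}(u_{[n,N-1]})$, $H_n(u_{[L-n,N-1]})$ and $H_n(u_{[0,N-L+n-1]})$ all have $N-L+1$ columns. $\otimes$ is the Kronecker product and $I_{\xi-1}$ the identity of size $\xi-1$ (the corresponding block is absent if $\xi=1$). A sequence $x$ with $x_k\in\mathbb{R}^d$ is persistently exciting of order $L$ if $\operatorname{rank}H_L(x)=dL$. An input-output sequence $\{u_k,y_k\}_{k=0}^{N-1}$ is a trajectory of $G$ if for a minimal realization $(A,B,C,D)$ of $G$ there exist $\bar x\in\mathbb{R}^n$ and states $\{x_k\}_{k=0}^N$ with $x_0=\bar x$, $x_{k+1}=Ax_k+Bu_k$, $y_k=Cx_k+Du_k$ for $k=0,\dots,N-1$. *)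

theory Defs
  imports "Jordan_Normal_Form.DL_Rank"
begin

definition mrank :: "real mat \<Rightarrow> nat" where
  "mrank M = vec_space.rank (dim_row M) M"

text \<open>Kalman controllability matrix [B, AB, ..., A^(n-1) B] and observability
  matrix [C; CA; ...; CA^(n-1)] for A n x n, B n x m, C p x n.\<close>
definition ctrb_mat :: "nat \<Rightarrow> nat \<Rightarrow> real mat \<Rightarrow> real mat \<Rightarrow> real mat" where
  "ctrb_mat n m A B = mat n (n * m) (\<lambda>(i,j). ((A ^\<^sub>m (j div m)) * B) $$ (i, j mod m))"

definition obsv_mat :: "nat \<Rightarrow> nat \<Rightarrow> real mat \<Rightarrow> real mat \<Rightarrow> real mat" where
  "obsv_mat n p A C = mat (n * p) n (\<lambda>(i,j). (C * (A ^\<^sub>m (i div p))) $$ (i mod p, j))"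

definition minimal_realization ::
  "nat \<Rightarrow> nat \<Rightarrow> nat \<Rightarrow> real mat \<Rightarrow> real mat \<Rightarrow> real mat \<Rightarrow> real mat \<Rightarrow> bool" where
  "minimal_realization n m p A B C D \<longleftrightarrow>
     A \<in> carrier_mat n n \<and> B \<in> carrier_mat n m \<and> C \<in> carrier_mat p n \<and> D \<in> carrier_mat p m \<and>
     mrank (ctrb_mat n m A B) = n \<and> mrank (obsv_mat n p A C) = n"

definition is_trajectory ::
  "nat \<Rightarrow> nat \<Rightarrow> nat \<Rightarrow> real mat \<Rightarrow> real mat \<Rightarrow> real mat \<Rightarrow> real mat
   \<Rightarrow> nat \<Rightarrow> (nat \<Rightarrow> real vec) \<Rightarrow> (nat \<Rightarrow> real vec) \<Rightarrow> bool" where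
  "is_trajectory n m p A B C D N u y \<longleftrightarrow>
     (\<forall>k<N. u k \<in> carrier_vec m \<and> y k \<in> carrier_vec p) \<and>
     (\<exists>x :: nat \<Rightarrow> real vec. x 0 \<in> carrier_vec n \<and>
        (\<forall>k<N. x (Suc k) = A *\<^sub>v x k + B *\<^sub>v u k \<and> y k = C *\<^sub>v x k + D *\<^sub>v u k))"

text \<open>Hankel matrix H_L(x) of depth L of the sequence {x_k}_{k=0}^{Nx-1}, x_k in R^d.
  Block (i,j) is x_{i+j}.\<close>
definition hankel :: "nat \<Rightarrow> nat \<Rightarrow> nat \<Rightarrow> (nat \<Rightarrow> real vec) \<Rightarrow> real mat" where
  "hankel d L Nx x = mat (d * L) (Nx - L + 1) (\<lambda>(i,j). x (i div d + j) $ (i mod d))"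

definition subseq :: "(nat \<Rightarrow> real vec) \<Rightarrow> nat \<Rightarrow> nat \<Rightarrow> real vec" where
  "subseq x a k = x (a + k)"

text \<open>Stacked vector x_[a,b] (components x_a, ..., x_b, each in R^d).\<close>
definition stack :: "nat \<Rightarrow> (nat \<Rightarrow> real vec) \<Rightarrow> nat \<Rightarrow> nat \<Rightarrow> real vec" where
  "stack d x a b = vec (d * (b + 1 - a)) (\<lambda>i. x (a + i div d) $ (i mod d))"

definition persistently_exciting :: "nat \<Rightarrow> nat \<Rightarrow> (nat \<Rightarrow> real vec) \<Rightarrow> nat \<Rightarrow> bool" where
  "persistently_exciting d Nx x L \<longleftrightarrow> mrank (hankel d L Nx x) = d * L"

text \<open>Kronecker product I_k \<otimes> M (block diagonal with k copies of M; empty if k = 0).\<close>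
definition kron_id :: "nat \<Rightarrow> real mat \<Rightarrow> real mat" where
  "kron_id k M = diag_block_mat (replicate k M)"

definition vstack :: "real mat \<Rightarrow> real mat \<Rightarrow> real mat" where
  "vstack X Y = four_block_mat X (0\<^sub>m (dim_row X) 0) Y (0\<^sub>m (dim_row Y) 0)"

definition bdiag :: "real mat \<Rightarrow> real mat \<Rightarrow> real mat" where
  "bdiag X Y = four_block_mat X (0\<^sub>m (dim_row X) (dim_col Y)) (0\<^sub>m (dim_row Y) (dim_col X)) Y"

definition stack_vecs :: "(nat \<Rightarrow> real vec) \<Rightarrow> nat \<Rightarrow> real vec" where
  "stack_vecs \<alpha> xi = foldr (@\<^sub>v) (map \<alpha> [1..<xi+1]) (vec 0 (\<lambda>_. 0))"

end

theory Submission
  imports Defs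
begin

text \<open>
  Controllability and persistency of excitation of order \<open>L + n\<close> make the matrix
  \<open>[H_L(u); x_0 \<dots> x_(N-L)]\<close> of full row rank (Willems' fundamental lemma): a left-kernel vector
  \<open>(\<eta>, \<xi>)\<close> is turned, using a linear relation among the functionals \<open>\<xi>\<^sup>T A\<^sup>k\<close> with \<open>k \<le> n\<close>,
  into a left-kernel vector of \<open>H_(L+n)(u)\<close>, which vanishes. Hence every trajectory of length \<open>L\<close>
  is a column combination of the data. A trajectory of length \<open>L + (\<xi> - 1)(L - n)\<close> is covered by
  \<open>\<xi>\<close> windows of length \<open>L\<close> overlapping in \<open>n\<close> samples, each of them such a combination
  \<open>\<alpha>\<^sup>i\<close>; conversely such windows glue to one trajectory, because by observability \<open>n\<close> common
  input-output samples force a common state. The matrix equation of the theorem stacks the first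
  window and the non-overlapping tails of the others, and the two overlap equations encode the
  shared samples.
\<close>

section \<open>Rank and kernels\<close>

lemma mrank_full_col_imp_kernel_zero:
  fixes M :: "real mat"
  assumes M: "M \<in> carrier_mat nr nc" and r: "mrank M = nc" and z: "z \<in> carrier_vec nc"
    and Mz: "M *\<^sub>v z = 0\<^sub>v nr"
  shows "z = 0\<^sub>v nc"
proof (rule ccontr)
  interpret V: vec_space "TYPE(real)" nr .
  assume nz: "z \<noteq> 0\<^sub>v nc"
  have rk: "V.rank M = nc" using r M unfolding mrank_def by auto
  show False
  proof (cases "distinct (cols M)")
    case True
    have "V.lin_indpt (set (cols M))" using V.full_rank_lin_indpt[OF M rk True] .
    moreover have "V.lin_dep (set (cols M))" using V.lin_depI[OF M z nz Mz True] .
    ultimately show False by simp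
  next
    case False
    obtain S where S: "maximal S (\<lambda>T. T \<subseteq> set (cols M) \<and> V.lin_indpt T)"
      using maximal_exists[of "(\<lambda>T. T \<subseteq> set (cols M) \<and> V.lin_indpt T)" "card (set (cols M))" "{}"]
      by (meson List.finite_set card_mono empty_iff empty_subsetI V.finite_lin_indpt2 rev_finite_subset)
    have "card S \<le> card (set (cols M))" using S by (simp add: card_mono maximal_def)
    also have "\<dots> < length (cols M)" using False card_distinct card_length le_neq_implies_less by blast
    finally have "card S < nc" using M by simp
    moreover have "V.rank M = card S" using V.rank_card_indpt[OF M S] .
    ultimately show False using rk by simp
  qed
qed

lemma mrank_full_row_imp_surj:
  fixes M :: "real mat"
  assumes M: "M \<in> carrier_mat nr nc" and r: "mrank M = nr" and b: "b \<in> carrier_vec nr"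
  shows "\<exists>z\<in>carrier_vec nc. M *\<^sub>v z = b"
proof -
  interpret V: vec_space "TYPE(real)" nr .
  have rk: "V.rank M = nr" using r M unfolding mrank_def by auto
  obtain S where S: "maximal S (\<lambda>T. T \<subseteq> set (cols M) \<and> V.lin_indpt T)"
    using maximal_exists[of "(\<lambda>T. T \<subseteq> set (cols M) \<and> V.lin_indpt T)" "card (set (cols M))" "{}"]
    by (meson List.finite_set card_mono empty_iff empty_subsetI V.finite_lin_indpt2 rev_finite_subset)
  have cS: "card S = nr" using V.rank_card_indpt[OF M S] rk by simp
  have Ssub: "S \<subseteq> set (cols M)" "V.lin_indpt S" using S unfolding maximal_def by auto
  have colsC: "set (cols M) \<subseteq> carrier_vec nr" using M cols_dim by blast
  have fS: "finite S" using Ssub(1) finite_subset by blast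
  have "V.basis S"
    by (rule V.dim_li_is_basis) (use fS Ssub colsC cS V.dim_is_n in auto)
  hence "V.span S = carrier_vec nr" unfolding V.basis_def by simp
  moreover have "V.span S \<subseteq> V.span (set (cols M))"
    by (rule V.span_is_monotone[OF Ssub(1)])
  ultimately have "b \<in> V.span (set (cols M))" using b by auto
  hence "b \<in> V.span_list (cols M)" using V.span_list_as_span[OF colsC] by simp
  then obtain c where bc: "b = V.lincomb_list c (cols M)" by (auto elim: V.in_span_listE)
  have "V.lincomb_list c (cols M) = mat_of_cols nr (cols M) *\<^sub>v vec (length (cols M)) c"
    by (rule V.lincomb_list_as_mat_mult) (use colsC in auto)
  also have "mat_of_cols nr (cols M) = M" using M mat_of_cols_cols[of M] by simp
  finally show ?thesis using bc M by (intro bexI[of _ "vec (length (cols M)) c"]) auto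
qed

lemma sum_squares_eq_0_imp_zero_vec:
  fixes w :: "real vec"
  assumes w: "w \<in> carrier_vec nr" and s: "(\<Sum>i<nr. w $ i * w $ i) = 0"
  shows "w = 0\<^sub>v nr"
proof (rule eq_vecI)
  fix i assume i: "i < dim_vec (0\<^sub>v nr :: real vec)"
  have "\<forall>i\<in>{..<nr}. w $ i * w $ i = 0"
    using sum_nonneg_eq_0_iff[of "{..<nr}" "\<lambda>i. w $ i * w $ i"] s by simp
  thus "w $ i = 0\<^sub>v nr $ i" using i by simp
qed (use w in auto)

lemma mrank_full_row_imp_left_kernel_zero:
  fixes M :: "real mat"
  assumes M: "M \<in> carrier_mat nr nc" and r: "mrank M = nr" and w: "w \<in> carrier_vec nr"
    and k: "\<forall>j<nc. (\<Sum>i<nr. w $ i * M $$ (i, j)) = 0"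
  shows "w = 0\<^sub>v nr"
proof -
  obtain z where z: "z \<in> carrier_vec nc" "M *\<^sub>v z = w" using mrank_full_row_imp_surj[OF M r w] by blast
  have "(\<Sum>i<nr. w $ i * w $ i) = (\<Sum>i<nr. w $ i * (\<Sum>j<nc. M $$ (i, j) * z $ j))"
    using z M by (intro sum.cong refl) (auto simp: mult_mat_vec_def scalar_prod_def row_def atLeast0LessThan)
  also have "\<dots> = (\<Sum>j<nc. z $ j * (\<Sum>i<nr. w $ i * M $$ (i, j)))"
    by (simp add: sum_distrib_left sum_distrib_right mult_ac sum.swap[of _ "{..<nr}"])
  also have "\<dots> = 0" using k by simp
  finally show ?thesis by (rule sum_squares_eq_0_imp_zero_vec[OF w])
qed

text \<open>The Gram matrix \<open>M M\<^sup>T\<close> is invertible, and \<open>M\<^sup>T (M M\<^sup>T)\<^sup>-\<^sup>1 b\<close> solves \<open>M z = b\<close>.\<close>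
lemma left_kernel_zero_imp_surj:
  fixes M :: "real mat"
  assumes M: "M \<in> carrier_mat nr nc"
    and lk: "\<And>w. w \<in> carrier_vec nr \<Longrightarrow> \<forall>j<nc. (\<Sum>i<nr. w $ i * M $$ (i, j)) = 0 \<Longrightarrow> w = 0\<^sub>v nr"
    and b: "b \<in> carrier_vec nr"
  shows "\<exists>z\<in>carrier_vec nc. M *\<^sub>v z = b"
proof -
  define G where "G = M * transpose_mat M"
  have G: "G \<in> carrier_mat nr nr" using M by (simp add: G_def)
  have MT: "transpose_mat M \<in> carrier_mat nc nr" using M by simp
  have "det G \<noteq> 0"
  proof
    assume "det G = 0"
    then obtain v where v: "v \<in> carrier_vec nr" "v \<noteq> 0\<^sub>v nr" "G *\<^sub>v v = 0\<^sub>v nr"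
      using det_0_iff_vec_prod_zero_field[OF G] by blast
    define t where "t = transpose_mat M *\<^sub>v v"
    have t: "t \<in> carrier_vec nc" using M v(1) by (simp add: t_def)
    have Mt: "M *\<^sub>v t = 0\<^sub>v nr" using v(3) assoc_mult_mat_vec[OF M MT v(1)]
      unfolding t_def G_def by simp
    have "t \<bullet> t = v \<bullet> (M *\<^sub>v t)"
      using transpose_vec_mult_scalar[OF M t v(1)] unfolding t_def[symmetric] .
    also have "\<dots> = 0" using Mt v by simp
    finally have "(\<Sum>i<nc. t $ i * t $ i) = 0"
      using t by (simp add: scalar_prod_def atLeast0LessThan)
    hence t0: "t = 0\<^sub>v nc" using sum_squares_eq_0_imp_zero_vec[OF t] by simp
    have "\<forall>j<nc. (\<Sum>i<nr. v $ i * M $$ (i, j)) = 0"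
    proof (intro allI impI)
      fix j assume j: "j < nc"
      have "(\<Sum>i<nr. v $ i * M $$ (i, j)) = col M j \<bullet> v"
        using M v(1) j by (simp add: scalar_prod_def atLeast0LessThan mult.commute)
      also have "\<dots> = t $ j" using M j unfolding t_def by simp
      finally show "(\<Sum>i<nr. v $ i * M $$ (i, j)) = 0" using t0 j by simp
    qed
    with lk[OF v(1)] v(2) show False by simp
  qed
  hence "G \<in> Units (ring_mat TYPE(real) nr undefined)" by (rule det_non_zero_imp_unit[OF G])
  then obtain G' where G': "G' \<in> carrier_mat nr nr" "G * G' = 1\<^sub>m nr"
    unfolding Units_def by (auto simp: ring_mat_simps)
  define z where "z = transpose_mat M *\<^sub>v (G' *\<^sub>v b)"
  have "M *\<^sub>v z = (G * G') *\<^sub>v b"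
    unfolding z_def G_def using assoc_mult_mat_vec[OF M MT, of "G' *\<^sub>v b"]
      assoc_mult_mat_vec[OF G[unfolded G_def] G'(1) b] G'(1) b by simp
  also have "\<dots> = b" using G' b by simp
  finally show ?thesis using M G' b by (intro bexI[of _ z]) (auto simp: z_def)
qed

lemma exists_nonzero_kernel_vec:
  fixes M :: "real mat"
  assumes M: "M \<in> carrier_mat nr nc" and lt: "nr < nc"
  shows "\<exists>z\<in>carrier_vec nc. z \<noteq> 0\<^sub>v nc \<and> M *\<^sub>v z = 0\<^sub>v nr"
proof (cases "distinct (cols M)")
  case True
  interpret V: vec_space "TYPE(real)" nr .
  have colsC: "set (cols M) \<subseteq> carrier_vec nr" using M cols_dim by blast
  have "\<not> V.lin_indpt (set (cols M))"
  proof
    assume li: "V.lin_indpt (set (cols M))"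
    have "card (set (cols M)) \<le> V.dim" using V.li_le_dim(2)[OF V.fin_dim _ li] colsC by simp
    moreover have "card (set (cols M)) = nc" using True distinct_card M by fastforce
    ultimately show False using lt V.dim_is_n by simp
  qed
  then show ?thesis using V.lin_depE[OF M _ True] by blast
next
  case False
  obtain i j where ij: "i < nc" "j < nc" "i \<noteq> j" "cols M ! i = cols M ! j"
    using False M unfolding distinct_conv_nth by auto
  define z :: "real vec" where "z = vec nc (\<lambda>k. if k = i then 1 else if k = j then -1 else 0)"
  have "z \<noteq> 0\<^sub>v nc"
  proof
    assume "z = 0\<^sub>v nc" hence "z $ i = 0" using ij by simp
    thus False using ij by (simp add: z_def)
  qed
  moreover have "M *\<^sub>v z = 0\<^sub>v nr"
  proof (rule eq_vecI)
    fix r assume "r < dim_vec (0\<^sub>v nr :: real vec)"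
    hence r: "r < nr" by simp
    have colij: "M $$ (r, i) = M $$ (r, j)"
      using ij M r by (metis carrier_matD col_def cols_nth index_vec)
    have "(M *\<^sub>v z) $ r = (\<Sum>k\<in>{0..<nc}. M $$ (r, k) * z $ k)"
      using M r by (simp add: scalar_prod_def z_def)
    also have "\<dots> = (\<Sum>k\<in>{0..<nc}. (if k = i then M $$ (r, i) else 0) + (if k = j then - M $$ (r, j) else 0))"
      using ij by (intro sum.cong) (auto simp: z_def)
    also have "\<dots> = 0" using ij colij by (simp add: sum.distrib)
    finally show "(M *\<^sub>v z) $ r = 0\<^sub>v nr $ r" using r by simp
  qed (use M in simp)
  ultimately show ?thesis by (intro bexI[of _ z]) (auto simp: z_def)
qed

lemma pow_mat_add:
  fixes A :: "real mat"
  assumes A: "A \<in> carrier_mat n n"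
  shows "A ^\<^sub>m a * A ^\<^sub>m b = A ^\<^sub>m (a + b)"
proof (induction b)
  case 0 then show ?case using A by simp
next
  case (Suc b)
  have "A ^\<^sub>m a * A ^\<^sub>m Suc b = (A ^\<^sub>m a * A ^\<^sub>m b) * A"
    using A by (simp add: assoc_mult_mat[of _ n n _ n _ n])
  then show ?case using Suc by simp
qed

lemma pow_mat_Suc_left:
  fixes A :: "real mat"
  assumes A: "A \<in> carrier_mat n n"
  shows "A ^\<^sub>m Suc k = A * A ^\<^sub>m k"
  using pow_mat_add[OF A, of 1 k] A by simp

text \<open>A weak form of Cayley--Hamilton: the \<open>n + 1\<close> functionals \<open>w \<mapsto> \<xi> \<bullet> A\<^sup>k w\<close>, \<open>k \<le> n\<close>,
  live in an \<open>n\<close>-dimensional space.\<close>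
lemma pow_mat_functional_monic_relation:
  fixes A :: "real mat" and \<xi> :: "real vec"
  assumes A: "A \<in> carrier_mat n n" and \<xi>: "\<xi> \<in> carrier_vec n"
  shows "\<exists>d\<le>n. \<exists>c. c d = 1 \<and> (\<forall>w\<in>carrier_vec n. (\<Sum>k<Suc d. c k * (\<xi> \<bullet> (A ^\<^sub>m k *\<^sub>v w))) = 0)"
proof -
  define Q where "Q = mat n (Suc n) (\<lambda>(r,k). (transpose_mat (A ^\<^sub>m k) *\<^sub>v \<xi>) $ r)"
  have Q: "Q \<in> carrier_mat n (Suc n)" by (simp add: Q_def)
  obtain z where z: "z \<in> carrier_vec (Suc n)" "z \<noteq> 0\<^sub>v (Suc n)" "Q *\<^sub>v z = 0\<^sub>v n"
    using exists_nonzero_kernel_vec[OF Q] by auto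
  have rel: "(\<Sum>k<Suc n. z $ k * (\<xi> \<bullet> (A ^\<^sub>m k *\<^sub>v w))) = 0" if w: "w \<in> carrier_vec n" for w
  proof -
    have Ak: "A ^\<^sub>m k \<in> carrier_mat n n" for k using A by simp
    have "\<xi> \<bullet> (A ^\<^sub>m k *\<^sub>v w) = (\<Sum>r<n. Q $$ (r, k) * w $ r)" if k: "k < Suc n" for k
      using transpose_vec_mult_scalar[OF Ak w \<xi>] w k A unfolding Q_def
      by (simp add: scalar_prod_def[of _ w] atLeast0LessThan)
    hence "(\<Sum>k<Suc n. z $ k * (\<xi> \<bullet> (A ^\<^sub>m k *\<^sub>v w)))
        = (\<Sum>r<n. w $ r * (\<Sum>k<Suc n. Q $$ (r, k) * z $ k))"
      by (simp add: sum_distrib_left mult_ac sum.swap[of _ "{..<Suc n}"] del: sum.lessThan_Suc)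
    also have "\<dots> = 0"
    proof (intro sum.neutral ballI)
      fix r assume "r \<in> {..<n}"
      hence "(Q *\<^sub>v z) $ r = (\<Sum>k<Suc n. Q $$ (r, k) * z $ k)"
        using Q z(1) by (auto simp: scalar_prod_def atLeast0LessThan row_def intro!: sum.cong)
      with z(3) \<open>r \<in> {..<n}\<close> show "w $ r * (\<Sum>k<Suc n. Q $$ (r, k) * z $ k) = 0" by simp
    qed
    finally show ?thesis .
  qed
  define D where "D = {k. k < Suc n \<and> z $ k \<noteq> 0}"
  have "D \<noteq> {}"
  proof
    assume "D = {}"
    hence "z = 0\<^sub>v (Suc n)" using z(1) unfolding D_def by (intro eq_vecI) auto
    with z(2) show False by simp
  qed
  moreover have fD: "finite D" unfolding D_def by simp
  ultimately have dD: "Max D \<in> D" by (rule Max_in[rotated])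
  define d where "d = Max D"
  have dn: "d \<le> n" and zd: "z $ d \<noteq> 0" using dD unfolding d_def D_def by auto
  have above: "z $ k = 0" if "d < k" "k < Suc n" for k
    using that Max_ge[OF fD, of k] unfolding d_def D_def by fastforce
  have "(\<Sum>k<Suc d. z $ k / z $ d * (\<xi> \<bullet> (A ^\<^sub>m k *\<^sub>v w))) = 0" if w: "w \<in> carrier_vec n" for w
  proof -
    have "(\<Sum>k<Suc d. z $ k * (\<xi> \<bullet> (A ^\<^sub>m k *\<^sub>v w))) = (\<Sum>k<Suc n. z $ k * (\<xi> \<bullet> (A ^\<^sub>m k *\<^sub>v w)))"
      using dn above by (intro sum.mono_neutral_left) auto
    thus ?thesis using rel[OF w] by (simp add: sum_divide_distrib[symmetric] del: sum.lessThan_Suc)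
  qed
  thus ?thesis using dn zd by (intro exI[of _ d] conjI exI[of _ "\<lambda>k. z $ k / z $ d"]) auto
qed

section \<open>Controllability and observability\<close>

lemma controllable_functional_eq_0:
  fixes A B :: "real mat" and \<xi> :: "real vec"
  assumes A: "A \<in> carrier_mat n n" and B: "B \<in> carrier_mat n m"
    and ctrb: "mrank (ctrb_mat n m A B) = n" and \<xi>: "\<xi> \<in> carrier_vec n"
    and cd: "c d = 1"
    and rel: "\<forall>w\<in>carrier_vec n. (\<Sum>k<Suc d. c k * (\<xi> \<bullet> (A ^\<^sub>m k *\<^sub>v w))) = 0"
    and low: "\<forall>i<d. \<forall>s<m. \<xi> \<bullet> (A ^\<^sub>m i *\<^sub>v col B s) = 0"
  shows "\<xi> = 0\<^sub>v n"
proof -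
  have Ak: "A ^\<^sub>m k \<in> carrier_mat n n" for k using A by simp
  have all: "\<xi> \<bullet> (A ^\<^sub>m q *\<^sub>v col B s) = 0" if s: "s < m" for q s
  proof (induction q rule: less_induct)
    case (less q)
    show ?case
    proof (cases "q < d")
      case True thus ?thesis using low s by simp
    next
      case False
      have cB: "col B s \<in> carrier_vec n" using B s by simp
      define w where "w = A ^\<^sub>m (q - d) *\<^sub>v col B s"
      have w: "w \<in> carrier_vec n" unfolding w_def by (rule mult_mat_vec_carrier[OF Ak cB])
      have shift: "\<xi> \<bullet> (A ^\<^sub>m k *\<^sub>v w) = \<xi> \<bullet> (A ^\<^sub>m (k + (q - d)) *\<^sub>v col B s)" for k
        unfolding w_def using assoc_mult_mat_vec[OF Ak Ak cB] pow_mat_add[OF A] by simp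
      have "0 = (\<Sum>k<Suc d. c k * (\<xi> \<bullet> (A ^\<^sub>m k *\<^sub>v w)))" using rel w by simp
      also have "\<dots> = \<xi> \<bullet> (A ^\<^sub>m q *\<^sub>v col B s)
          + (\<Sum>k<d. c k * (\<xi> \<bullet> (A ^\<^sub>m (k + (q - d)) *\<^sub>v col B s)))"
        using False cd by (simp add: shift)
      also have "(\<Sum>k<d. c k * (\<xi> \<bullet> (A ^\<^sub>m (k + (q - d)) *\<^sub>v col B s))) = 0"
        using False less.IH by (intro sum.neutral) auto
      finally show ?thesis by simp
    qed
  qed
  show ?thesis
  proof (rule mrank_full_row_imp_left_kernel_zero[OF _ ctrb \<xi>])
    show "ctrb_mat n m A B \<in> carrier_mat n (n * m)" by (simp add: ctrb_mat_def)
    show "\<forall>j<n * m. (\<Sum>i<n. \<xi> $ i * ctrb_mat n m A B $$ (i, j)) = 0"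
    proof (intro allI impI)
      fix j assume j: "j < n * m"
      hence s: "j mod m < m" by (metis mod_less_divisor mult_is_0 neq0_conv not_less0)
      have AB: "A ^\<^sub>m (j div m) * B \<in> carrier_mat n m" using mult_carrier_mat[OF Ak B] .
      have "(\<Sum>i<n. \<xi> $ i * ctrb_mat n m A B $$ (i, j)) = \<xi> \<bullet> col (A ^\<^sub>m (j div m) * B) (j mod m)"
        using j s AB \<xi> A by (auto simp: ctrb_mat_def scalar_prod_def atLeast0LessThan intro!: sum.cong)
      also have "\<dots> = \<xi> \<bullet> (A ^\<^sub>m (j div m) *\<^sub>v col B (j mod m))"
        using col_mult2[OF Ak B s] by simp
      also have "\<dots> = 0" using all s by simp
      finally show "(\<Sum>i<n. \<xi> $ i * ctrb_mat n m A B $$ (i, j)) = 0" .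
    qed
  qed
qed

lemma obsv_mat_mult_vec_eq_0:
  fixes A C :: "real mat"
  assumes A: "A \<in> carrier_mat n n" and C: "C \<in> carrier_mat p n" and z: "z \<in> carrier_vec n"
    and CAz: "\<forall>k<n. C *\<^sub>v (A ^\<^sub>m k *\<^sub>v z) = 0\<^sub>v p"
  shows "obsv_mat n p A C *\<^sub>v z = 0\<^sub>v (n * p)"
proof (rule eq_vecI)
  fix i assume "i < dim_vec (0\<^sub>v (n * p) :: real vec)"
  hence i: "i < n * p" by simp
  hence q: "i div p < n" and r: "i mod p < p"
    by (simp add: less_mult_imp_div_less mult.commute) (metis i mod_less_divisor mult_is_0 neq0_conv not_less0)
  have Ak: "A ^\<^sub>m (i div p) \<in> carrier_mat n n" using A by simp
  have G: "C * A ^\<^sub>m (i div p) \<in> carrier_mat p n" using C Ak by simp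
  have entry: "(G *\<^sub>v z) $ r = (\<Sum>l<n. G $$ (r, l) * z $ l)"
    if "G \<in> carrier_mat p n" "r < p" for G r
    using that z by (simp add: scalar_prod_def atLeast0LessThan)
  have "(obsv_mat n p A C *\<^sub>v z) $ i = (\<Sum>l<n. (C * A ^\<^sub>m (i div p)) $$ (i mod p, l) * z $ l)"
    using i z by (simp add: obsv_mat_def scalar_prod_def atLeast0LessThan)
  also have "\<dots> = ((C * A ^\<^sub>m (i div p)) *\<^sub>v z) $ (i mod p)" using entry[OF G r] by simp
  also have "\<dots> = (C *\<^sub>v (A ^\<^sub>m (i div p) *\<^sub>v z)) $ (i mod p)" using C Ak z by simp
  also have "\<dots> = 0" using CAz q r by simp
  finally show "(obsv_mat n p A C *\<^sub>v z) $ i = 0\<^sub>v (n * p) $ i" using i by simp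
qed (simp add: obsv_mat_def)

lemma same_input_state_diff:
  fixes A B :: "real mat"
  assumes A: "A \<in> carrier_mat n n" and B: "B \<in> carrier_mat n m"
    and X0: "X 0 \<in> carrier_vec n" and Y0: "Y 0 \<in> carrier_vec n"
    and dyn: "\<forall>k<K. U k \<in> carrier_vec m \<and> X (Suc k) = A *\<^sub>v X k + B *\<^sub>v U k
       \<and> Y (Suc k) = A *\<^sub>v Y k + B *\<^sub>v U k"
  shows "k \<le> K \<Longrightarrow> X k \<in> carrier_vec n \<and> Y k \<in> carrier_vec n \<and> X k - Y k = A ^\<^sub>m k *\<^sub>v (X 0 - Y 0)"
proof (induction k)
  case (Suc k)
  hence k: "k < K" and IH: "X k \<in> carrier_vec n" "Y k \<in> carrier_vec n"
    "X k - Y k = A ^\<^sub>m k *\<^sub>v (X 0 - Y 0)"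
    by auto
  have U: "U k \<in> carrier_vec m" and e1: "X (Suc k) = A *\<^sub>v X k + B *\<^sub>v U k"
    and e2: "Y (Suc k) = A *\<^sub>v Y k + B *\<^sub>v U k" using dyn k by auto
  have Ak: "A ^\<^sub>m k \<in> carrier_mat n n" using A by simp
  have z: "X 0 - Y 0 \<in> carrier_vec n" using X0 Y0 by simp
  have "X (Suc k) - Y (Suc k) = A *\<^sub>v X k - A *\<^sub>v Y k"
    unfolding e1 e2 using A B U IH by (intro eq_vecI) auto
  also have "\<dots> = A *\<^sub>v (X k - Y k)" using mult_minus_distrib_mat_vec[OF A IH(1,2)] by simp
  also have "\<dots> = A ^\<^sub>m Suc k *\<^sub>v (X 0 - Y 0)"
    unfolding IH(3) pow_mat_Suc_left[OF A] using assoc_mult_mat_vec[OF A Ak z] by simp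
  finally show ?case unfolding e1 e2 using A B U IH(1,2) by auto
qed (use X0 Y0 A in simp)

lemma observable_initial_state_unique:
  fixes A B C D :: "real mat"
  assumes A: "A \<in> carrier_mat n n" and B: "B \<in> carrier_mat n m"
    and C: "C \<in> carrier_mat p n" and D: "D \<in> carrier_mat p m"
    and obs: "mrank (obsv_mat n p A C) = n"
    and X0: "X 0 \<in> carrier_vec n" and Y0: "Y 0 \<in> carrier_vec n"
    and dyn: "\<forall>k<n. U k \<in> carrier_vec m \<and> X (Suc k) = A *\<^sub>v X k + B *\<^sub>v U k
       \<and> Y (Suc k) = A *\<^sub>v Y k + B *\<^sub>v U k \<and> C *\<^sub>v X k + D *\<^sub>v U k = C *\<^sub>v Y k + D *\<^sub>v U k"
  shows "X 0 = Y 0"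
proof -
  define z where "z = X 0 - Y 0"
  have z: "z \<in> carrier_vec n" using X0 Y0 by (simp add: z_def)
  have "C *\<^sub>v (A ^\<^sub>m k *\<^sub>v z) = 0\<^sub>v p" if k: "k < n" for k
  proof -
    have X: "X k \<in> carrier_vec n" "Y k \<in> carrier_vec n" "X k - Y k = A ^\<^sub>m k *\<^sub>v z"
      using same_input_state_diff[where X = X and Y = Y and U = U and K = n, OF A B X0 Y0, of k] dyn k unfolding z_def by auto
    have U: "U k \<in> carrier_vec m" and out: "C *\<^sub>v X k + D *\<^sub>v U k = C *\<^sub>v Y k + D *\<^sub>v U k"
      using dyn k by auto
    have "C *\<^sub>v X k = C *\<^sub>v Y k"
    proof (rule eq_vecI)
      fix i assume "i < dim_vec (C *\<^sub>v Y k)"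
      thus "(C *\<^sub>v X k) $ i = (C *\<^sub>v Y k) $ i"
        using arg_cong[OF out, of "\<lambda>v. v $ i"] C D U by simp
    qed simp
    thus ?thesis using mult_minus_distrib_mat_vec[OF C X(1,2)] X(3) C X by simp
  qed
  hence "z = 0\<^sub>v n"
    using mrank_full_col_imp_kernel_zero[of "obsv_mat n p A C" "n * p" n z] obs z
      obsv_mat_mult_vec_eq_0[OF A C z] by (simp add: obsv_mat_def)
  show ?thesis
  proof (rule eq_vecI)
    fix i assume "i < dim_vec (Y 0)"
    hence i: "i < n" using Y0 by simp
    have "(X 0 - Y 0) $ i = 0" using \<open>z = 0\<^sub>v n\<close> i unfolding z_def by simp
    thus "X 0 $ i = Y 0 $ i" using i Y0 by simp
  qed (use X0 Y0 in simp)
qed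

text \<open>\<open>hankel_comb d K a f\<close> is the sequence whose first \<open>L\<close> terms, stacked, form \<open>H_L(f) a\<close>.\<close>
definition hankel_comb :: "nat \<Rightarrow> nat \<Rightarrow> real vec \<Rightarrow> (nat \<Rightarrow> real vec) \<Rightarrow> nat \<Rightarrow> real vec" where
  "hankel_comb d K a f k = vec d (\<lambda>r. \<Sum>j<K. a $ j * f (k + j) $ r)"

lemma hankel_comb_carrier[simp]: "hankel_comb d K a f k \<in> carrier_vec d"
  and dim_hankel_comb[simp]: "dim_vec (hankel_comb d K a f k) = d"
  by (auto simp: hankel_comb_def)

lemma index_hankel_comb[simp]: "r < d \<Longrightarrow> hankel_comb d K a f k $ r = (\<Sum>j<K. a $ j * f (k + j) $ r)"
  by (simp add: hankel_comb_def)

lemma hankel_comb_subseq: "hankel_comb d K a (subseq f c) = (\<lambda>k. hankel_comb d K a f (c + k))"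
  unfolding hankel_comb_def subseq_def by (simp add: add.assoc)

lemma mult_mat_vec_hankel_comb:
  fixes G :: "real mat"
  assumes G: "G \<in> carrier_mat r c" and f: "\<forall>j<K. f (k + j) \<in> carrier_vec c"
  shows "G *\<^sub>v hankel_comb c K a f k = hankel_comb r K a (\<lambda>i. G *\<^sub>v f i) k"
proof (rule eq_vecI)
  fix i assume "i < dim_vec (hankel_comb r K a (\<lambda>i. G *\<^sub>v f i) k)"
  hence i: "i < r" by simp
  have "(G *\<^sub>v hankel_comb c K a f k) $ i = (\<Sum>l<c. \<Sum>j<K. a $ j * (G $$ (i, l) * f (k + j) $ l))"
    using G i by (simp add: scalar_prod_def atLeast0LessThan sum_distrib_left mult_ac)
  also have "\<dots> = (\<Sum>j<K. \<Sum>l<c. a $ j * (G $$ (i, l) * f (k + j) $ l))" by (rule sum.swap)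
  also have "\<dots> = (\<Sum>j<K. a $ j * (G *\<^sub>v f (k + j)) $ i)"
  proof (intro sum.cong refl)
    fix j assume "j \<in> {..<K}"
    hence "dim_vec (f (k + j)) = c" using f by auto
    thus "(\<Sum>l<c. a $ j * (G $$ (i, l) * f (k + j) $ l)) = a $ j * (G *\<^sub>v f (k + j)) $ i"
      using G i by (simp add: scalar_prod_def atLeast0LessThan sum_distrib_left)
  qed
  finally show "(G *\<^sub>v hankel_comb c K a f k) $ i = hankel_comb r K a (\<lambda>i. G *\<^sub>v f i) k $ i"
    using i by simp
qed (use G in simp)

lemma hankel_comb_add:
  assumes "\<forall>j<K. f (k + j) \<in> carrier_vec d \<and> g (k + j) \<in> carrier_vec d"
  shows "hankel_comb d K a (\<lambda>i. f i + g i) k = hankel_comb d K a f k + hankel_comb d K a g k"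
proof (rule eq_vecI)
  fix r assume "r < dim_vec (hankel_comb d K a f k + hankel_comb d K a g k)"
  hence r: "r < d" by simp
  have "(\<Sum>j<K. a $ j * (f (k + j) + g (k + j)) $ r) = (\<Sum>j<K. a $ j * f (k + j) $ r + a $ j * g (k + j) $ r)"
    using assms r by (intro sum.cong refl) (auto simp: distrib_left)
  thus "hankel_comb d K a (\<lambda>i. f i + g i) k $ r = (hankel_comb d K a f k + hankel_comb d K a g k) $ r"
    using r by (simp add: sum.distrib)
qed simp

lemma sum_lessThan_add_split:
  fixes f :: "nat \<Rightarrow> real"
  shows "(\<Sum>i<a + b. f i) = (\<Sum>i<a. f i) + (\<Sum>i<b. f (a + i))"
  by (induction b) (auto simp: add.assoc)

lemma sum_lessThan_mult_split:
  fixes f :: "nat \<Rightarrow> real"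
  shows "(\<Sum>i<m * K. f i) = (\<Sum>k<K. \<Sum>s<m. f (k * m + s))"
proof (induction K)
  case (Suc K)
  have "(\<Sum>i<m * Suc K. f i) = (\<Sum>i<m * K + m. f i)" by (simp add: algebra_simps)
  also have "\<dots> = (\<Sum>k<Suc K. \<Sum>s<m. f (k * m + s))"
    unfolding sum_lessThan_add_split using Suc by (simp add: mult.commute)
  finally show ?case .
qed simp

lemma block_index_less: "k < L \<Longrightarrow> s < (m::nat) \<Longrightarrow> k * m + s < m * L"
proof -
  assume k: "k < L" and s: "s < m"
  have "k * m + s < Suc k * m" using s by simp
  also have "\<dots> \<le> L * m" using k by (intro mult_le_mono1) simp
  finally show ?thesis by (simp add: mult.commute)
qed

lemma block_index_div[simp]: "s < (m::nat) \<Longrightarrow> (k * m + s) div m = k"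
  and block_index_mod[simp]: "s < (m::nat) \<Longrightarrow> (k * m + s) mod m = s"
  by auto

lemma sum_if_window:
  fixes g :: "nat \<Rightarrow> real"
  assumes "t + L \<le> K"
  shows "(\<Sum>q<K. if t \<le> q \<and> q < t + L then g q else 0) = (\<Sum>k<L. g (k + t))"
proof -
  have "(\<Sum>q<K. if t \<le> q \<and> q < t + L then g q else 0) = sum g {q \<in> {..<K}. t \<le> q \<and> q < t + L}"
    using sum.inter_filter[of "{..<K}" g "\<lambda>q. t \<le> q \<and> q < t + L"] by simp
  also have "{q \<in> {..<K}. t \<le> q \<and> q < t + L} = {0 + t..<L + t}" using assms by auto
  also have "sum g {0 + t..<L + t} = (\<Sum>k\<in>{0..<L}. g (k + t))" by (rule sum.shift_bounds_nat_ivl)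
  finally show ?thesis by (simp add: atLeast0LessThan)
qed

lemma sum_if_prefix:
  fixes g :: "nat \<Rightarrow> real"
  assumes "t \<le> K"
  shows "(\<Sum>q<K. if q < t then g q else 0) = (\<Sum>q<t. g q)"
proof -
  have "(\<Sum>q<K. if q < t then g q else 0) = sum g {q \<in> {..<K}. q < t}"
    using sum.inter_filter[of "{..<K}" g "\<lambda>q. q < t"] by simp
  also have "{q \<in> {..<K}. q < t} = {..<t}" using assms by auto
  finally show ?thesis .
qed

lemma sum_sum_weighted_swap:
  fixes c :: "nat \<Rightarrow> real"
  shows "(\<Sum>q\<in>Q. \<Sum>s\<in>S. (\<Sum>t\<in>T. c t * G t q s) * h q s) = (\<Sum>t\<in>T. c t * (\<Sum>q\<in>Q. \<Sum>s\<in>S. G t q s * h q s))"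
proof -
  have "(\<Sum>q\<in>Q. \<Sum>s\<in>S. (\<Sum>t\<in>T. c t * G t q s) * h q s) = (\<Sum>q\<in>Q. \<Sum>t\<in>T. \<Sum>s\<in>S. c t * (G t q s * h q s))"
    by (simp add: sum_distrib_right mult.assoc sum.swap[of _ S])
  also have "\<dots> = (\<Sum>t\<in>T. c t * (\<Sum>q\<in>Q. \<Sum>s\<in>S. G t q s * h q s))"
    by (simp add: sum_distrib_left sum.swap[of _ Q])
  finally show ?thesis .
qed

lemma sum_mult_hankel_col:
  assumes "j < Nx - K + 1"
  shows "(\<Sum>i<d * K. w $ i * hankel d K Nx f $$ (i, j)) = (\<Sum>k<K. \<Sum>s<d. w $ (k * d + s) * f (k + j) $ s)"
  unfolding sum_lessThan_mult_split
  using assms block_index_less by (intro sum.cong refl) (auto simp: hankel_def)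

lemma scalar_prod_mult_mat_vec_cols:
  fixes G :: "real mat"
  assumes \<xi>: "\<xi> \<in> carrier_vec n" and G: "G \<in> carrier_mat n m" and w: "w \<in> carrier_vec m"
  shows "\<xi> \<bullet> (G *\<^sub>v w) = (\<Sum>s<m. (\<xi> \<bullet> col G s) * w $ s)"
proof -
  have "\<xi> \<bullet> (G *\<^sub>v w) = (\<Sum>r<n. \<Sum>s<m. \<xi> $ r * (G $$ (r, s) * w $ s))"
    using \<xi> G w by (simp add: scalar_prod_def atLeast0LessThan sum_distrib_left)
  also have "\<dots> = (\<Sum>s<m. \<Sum>r<n. \<xi> $ r * (G $$ (r, s) * w $ s))" by (rule sum.swap)
  also have "\<dots> = (\<Sum>s<m. (\<xi> \<bullet> col G s) * w $ s)"
    using \<xi> G by (intro sum.cong refl) (simp add: scalar_prod_def atLeast0LessThan sum_distrib_left mult_ac)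
  finally show ?thesis .
qed

section \<open>Trajectories and the fundamental lemma\<close>

text \<open>The coefficient of the input \<open>u (j + q)\<close> in
  \<open>\<Sum>t\<le>d. c t * (\<eta>\<^sup>T u[j+t, j+t+L-1] + \<xi>\<^sup>T x (j + t))\<close> once every \<open>x (j + t)\<close> is expanded
  from \<open>x j\<close>, where \<open>\<beta> i\<close> stands for \<open>\<xi>\<^sup>T A\<^sup>i B\<close>.\<close>
definition shifted_kernel_coeff ::
  "(nat \<Rightarrow> real) \<Rightarrow> nat \<Rightarrow> nat \<Rightarrow> (nat \<Rightarrow> real) \<Rightarrow> (nat \<Rightarrow> real) \<Rightarrow> nat \<Rightarrow> real" where
  "shifted_kernel_coeff c d L \<eta> \<beta> q =
     (\<Sum>t<Suc d. c t * (if t \<le> q \<and> q < t + L then \<eta> (q - t) else 0))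
   + (\<Sum>t<Suc d. c t * (if q < t then \<beta> (t - 1 - q) else 0))"

lemma shifted_kernel_coeff_eq_0_imp:
  assumes cd: "c d = 1" and dn: "d \<le> n"
    and W0: "\<And>q. q < L + n \<Longrightarrow> shifted_kernel_coeff c d L \<eta> \<beta> q = 0"
  shows "(\<forall>k<L. \<eta> k = 0) \<and> (\<forall>i<d. \<beta> i = 0)"
proof -
  have \<eta>0: "\<eta> k = 0" if "k < L" for k
    using that
  proof (induction "L - k" arbitrary: k rule: less_induct)
    case less
    have "(\<Sum>t<d. c t * (if t \<le> d + k \<and> d + k < t + L then \<eta> (d + k - t) else 0)) = 0"
    proof (intro sum.neutral ballI)
      fix t assume t: "t \<in> {..<d}"
      show "c t * (if t \<le> d + k \<and> d + k < t + L then \<eta> (d + k - t) else 0) = 0"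
      proof (cases "t \<le> d + k \<and> d + k < t + L")
        case True
        hence "d + k - t < L" "L - (d + k - t) < L - k" using t by auto
        thus ?thesis using less.hyps by simp
      qed auto
    qed
    moreover have "(\<Sum>t<Suc d. c t * (if d + k < t then \<beta> (t - 1 - (d + k)) else 0)) = 0"
      by (intro sum.neutral) auto
    ultimately have "shifted_kernel_coeff c d L \<eta> \<beta> (d + k) = \<eta> k"
      using less.prems cd by (simp add: shifted_kernel_coeff_def)
    thus ?case using W0[of "d + k"] less.prems dn by simp
  qed
  have "\<beta> i = 0" if "i < d" for i
    using that
  proof (induction i rule: less_induct)
    case (less i)
    define q where "q = d - 1 - i"
    have qd: "q < d" "d - 1 - q = i" using less.prems by (auto simp: q_def)
    have "(\<Sum>t<Suc d. c t * (if t \<le> q \<and> q < t + L then \<eta> (q - t) else 0)) = 0"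
      using \<eta>0 by (intro sum.neutral) auto
    moreover have "(\<Sum>t<d. c t * (if q < t then \<beta> (t - 1 - q) else 0)) = 0"
    proof (intro sum.neutral ballI)
      fix t assume t: "t \<in> {..<d}"
      show "c t * (if q < t then \<beta> (t - 1 - q) else 0) = 0"
      proof (cases "q < t")
        case True
        hence "t - 1 - q < i" using t qd by auto
        thus ?thesis using less.IH less.prems by auto
      qed auto
    qed
    ultimately have "shifted_kernel_coeff c d L \<eta> \<beta> q = \<beta> i"
      using qd cd by (simp add: shifted_kernel_coeff_def)
    thus ?case using W0[of q] qd dn by simp
  qed
  with \<eta>0 show ?thesis by blast
qed

locale lti_trajectory =
  fixes n m p :: nat and A B C D :: "real mat" and N :: nat and u y x :: "nat \<Rightarrow> real vec"
  assumes A: "A \<in> carrier_mat n n" and B: "B \<in> carrier_mat n m"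
    and C: "C \<in> carrier_mat p n" and D: "D \<in> carrier_mat p m"
    and x0: "x 0 \<in> carrier_vec n"
    and u_carrier: "\<forall>k<N. u k \<in> carrier_vec m"
    and dyn: "\<forall>k<N. x (Suc k) = A *\<^sub>v x k + B *\<^sub>v u k \<and> y k = C *\<^sub>v x k + D *\<^sub>v u k"
begin

lemma x_carrier: "k \<le> N \<Longrightarrow> x k \<in> carrier_vec n"
proof (induction k)
  case 0 then show ?case using x0 by simp
next
  case (Suc k)
  hence "k < N" by simp
  thus ?case using dyn Suc A B u_carrier by auto
qed

lemma hankel_comb_state_step:
  assumes "k + K \<le> N"
  shows "hankel_comb n K a x (Suc k) = A *\<^sub>v hankel_comb n K a x k + B *\<^sub>v hankel_comb m K a u k"
proof -
  have "hankel_comb n K a x (Suc k) = hankel_comb n K a (\<lambda>i. A *\<^sub>v x i + B *\<^sub>v u i) k"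
    unfolding hankel_comb_def using assms dyn by (intro eq_vecI sum.cong) auto
  also have "\<dots> = hankel_comb n K a (\<lambda>i. A *\<^sub>v x i) k + hankel_comb n K a (\<lambda>i. B *\<^sub>v u i) k"
    by (rule hankel_comb_add) (use assms x_carrier u_carrier A B in auto)
  also have "\<dots> = A *\<^sub>v hankel_comb n K a x k + B *\<^sub>v hankel_comb m K a u k"
    using mult_mat_vec_hankel_comb[OF A, of K x k a] mult_mat_vec_hankel_comb[OF B, of K u k a]
      assms x_carrier u_carrier by auto
  finally show ?thesis .
qed

lemma hankel_comb_output:
  assumes "k + K \<le> N"
  shows "hankel_comb p K a y k = C *\<^sub>v hankel_comb n K a x k + D *\<^sub>v hankel_comb m K a u k"
proof -
  have "hankel_comb p K a y k = hankel_comb p K a (\<lambda>i. C *\<^sub>v x i + D *\<^sub>v u i) k"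
    unfolding hankel_comb_def using assms dyn by (intro eq_vecI sum.cong) auto
  also have "\<dots> = hankel_comb p K a (\<lambda>i. C *\<^sub>v x i) k + hankel_comb p K a (\<lambda>i. D *\<^sub>v u i) k"
    by (rule hankel_comb_add) (use assms x_carrier u_carrier C D in auto)
  also have "\<dots> = C *\<^sub>v hankel_comb n K a x k + D *\<^sub>v hankel_comb m K a u k"
    using mult_mat_vec_hankel_comb[OF C, of K x k a] mult_mat_vec_hankel_comb[OF D, of K u k a]
      assms x_carrier u_carrier by auto
  finally show ?thesis .
qed

lemma functional_state_expansion:
  assumes \<xi>: "\<xi> \<in> carrier_vec n"
  shows "j + t \<le> N \<Longrightarrow> \<xi> \<bullet> (A ^\<^sub>m q *\<^sub>v x (j + t)) = \<xi> \<bullet> (A ^\<^sub>m (q + t) *\<^sub>v x j)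
     + (\<Sum>i<t. \<xi> \<bullet> (A ^\<^sub>m (q + t - 1 - i) *\<^sub>v (B *\<^sub>v u (j + i))))"
proof (induction t arbitrary: q)
  case (Suc t)
  hence jt: "j + t < N" by simp
  have Aq: "A ^\<^sub>m q \<in> carrier_mat n n" using A by simp
  have xj: "x (j + t) \<in> carrier_vec n" using x_carrier jt by simp
  have uj: "u (j + t) \<in> carrier_vec m" using u_carrier jt by simp
  have Ax: "A *\<^sub>v x (j + t) \<in> carrier_vec n" and Bu: "B *\<^sub>v u (j + t) \<in> carrier_vec n"
    using A B xj uj by auto
  have "\<xi> \<bullet> (A ^\<^sub>m q *\<^sub>v x (j + Suc t))
      = \<xi> \<bullet> (A ^\<^sub>m q *\<^sub>v (A *\<^sub>v x (j + t))) + \<xi> \<bullet> (A ^\<^sub>m q *\<^sub>v (B *\<^sub>v u (j + t)))"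
    using dyn jt mult_add_distrib_mat_vec[OF Aq Ax Bu] scalar_prod_add_distrib[OF \<xi>] Aq Ax Bu by simp
  also have "A ^\<^sub>m q *\<^sub>v (A *\<^sub>v x (j + t)) = A ^\<^sub>m (Suc q) *\<^sub>v x (j + t)"
    using assoc_mult_mat_vec[OF Aq A xj] by simp
  also have "\<xi> \<bullet> (A ^\<^sub>m (Suc q) *\<^sub>v x (j + t)) = \<xi> \<bullet> (A ^\<^sub>m (Suc q + t) *\<^sub>v x j)
     + (\<Sum>i<t. \<xi> \<bullet> (A ^\<^sub>m (Suc q + t - 1 - i) *\<^sub>v (B *\<^sub>v u (j + i))))"
    using Suc.IH[of "Suc q"] jt by simp
  finally show ?case by (simp add: add.commute add.left_commute)
qed simp

text \<open>Summing the left-kernel equations at times \<open>j, \<dots>, j + d\<close> with the coefficients of a monic relation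
  for \<open>\<xi>\<close> cancels the state \<open>x j\<close>, leaving a left-kernel vector of \<open>H_(L+n)(u)\<close>.\<close>
lemma shifted_kernel_equation:
  fixes \<eta> :: "nat \<Rightarrow> nat \<Rightarrow> real"
  assumes \<xi>: "\<xi> \<in> carrier_vec n"
    and rel: "\<forall>w\<in>carrier_vec n. (\<Sum>t<Suc d. c t * (\<xi> \<bullet> (A ^\<^sub>m t *\<^sub>v w))) = 0"
    and ker: "\<And>j. j + L \<le> N \<Longrightarrow> (\<Sum>k<L. \<Sum>s<m. \<eta> k s * u (k + j) $ s) + \<xi> \<bullet> x j = 0"
    and j: "j + (L + n) \<le> N" and dn: "d \<le> n"
  shows "(\<Sum>q<L + n. \<Sum>s<m. shifted_kernel_coeff c d L (\<lambda>k. \<eta> k s)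
            (\<lambda>i. \<xi> \<bullet> (A ^\<^sub>m i *\<^sub>v col B s)) q * u (q + j) $ s) = 0"
proof -
  define \<beta> where "\<beta> i s = \<xi> \<bullet> (A ^\<^sub>m i *\<^sub>v col B s)" for i s
  define P1 where "P1 t = (\<Sum>k<L. \<Sum>s<m. \<eta> k s * u (k + t + j) $ s)" for t
  define P2 where "P2 t = (\<Sum>i<t. \<Sum>s<m. \<beta> (t - 1 - i) s * u (i + j) $ s)" for t
  have Aq: "A ^\<^sub>m q \<in> carrier_mat n n" for q using A by simp
  have input: "\<xi> \<bullet> (A ^\<^sub>m q *\<^sub>v (B *\<^sub>v w)) = (\<Sum>s<m. \<beta> q s * w $ s)" if w: "w \<in> carrier_vec m" for q w
    using scalar_prod_mult_mat_vec_cols[OF \<xi> mult_carrier_mat[OF Aq B] w]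
      assoc_mult_mat_vec[OF Aq B w] col_mult2[OF Aq B] unfolding \<beta>_def by simp
  have step: "P1 t + P2 t + \<xi> \<bullet> (A ^\<^sub>m t *\<^sub>v x j) = 0" if t: "t < Suc d" for t
  proof -
    have jt: "j + t + L \<le> N" using t dn j by simp
    have "\<xi> \<bullet> x (j + t) = \<xi> \<bullet> (A ^\<^sub>m 0 *\<^sub>v x (j + t))" using A x_carrier jt by simp
    also have "\<dots> = \<xi> \<bullet> (A ^\<^sub>m t *\<^sub>v x j) + (\<Sum>i<t. \<xi> \<bullet> (A ^\<^sub>m (t - 1 - i) *\<^sub>v (B *\<^sub>v u (j + i))))"
      using functional_state_expansion[OF \<xi>, of j t 0] jt by simp
    also have "(\<Sum>i<t. \<xi> \<bullet> (A ^\<^sub>m (t - 1 - i) *\<^sub>v (B *\<^sub>v u (j + i)))) = P2 t"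
      unfolding P2_def using jt u_carrier input by (intro sum.cong refl) (simp add: add.commute)
    finally show ?thesis
      using ker[OF jt] unfolding P1_def by (simp add: add.commute add.left_commute)
  qed
  have window: "(\<Sum>q<L + n. \<Sum>s<m. (if t \<le> q \<and> q < t + L then \<eta> (q - t) s else 0) * u (q + j) $ s) = P1 t"
    if t: "t < Suc d" for t
  proof -
    have "(\<Sum>q<L + n. \<Sum>s<m. (if t \<le> q \<and> q < t + L then \<eta> (q - t) s else 0) * u (q + j) $ s)
        = (\<Sum>q<L + n. if t \<le> q \<and> q < t + L then (\<Sum>s<m. \<eta> (q - t) s * u (q + j) $ s) else 0)"
      by (intro sum.cong refl) auto
    also have "\<dots> = P1 t" unfolding P1_def by (subst sum_if_window) (use t dn in \<open>simp_all add: add.assoc\<close>)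
    finally show ?thesis .
  qed
  have prefix: "(\<Sum>q<L + n. \<Sum>s<m. (if q < t then \<beta> (t - 1 - q) s else 0) * u (q + j) $ s) = P2 t"
    if t: "t < Suc d" for t
  proof -
    have "(\<Sum>q<L + n. \<Sum>s<m. (if q < t then \<beta> (t - 1 - q) s else 0) * u (q + j) $ s)
        = (\<Sum>q<L + n. if q < t then (\<Sum>s<m. \<beta> (t - 1 - q) s * u (q + j) $ s) else 0)"
      by (intro sum.cong refl) auto
    also have "\<dots> = P2 t" unfolding P2_def by (rule sum_if_prefix) (use t dn in simp)
    finally show ?thesis .
  qed
  have "(\<Sum>q<L + n. \<Sum>s<m. shifted_kernel_coeff c d L (\<lambda>k. \<eta> k s) (\<lambda>i. \<beta> i s) q * u (q + j) $ s)
      = (\<Sum>t<Suc d. c t * (\<Sum>q<L + n. \<Sum>s<m. (if t \<le> q \<and> q < t + L then \<eta> (q - t) s else 0) * u (q + j) $ s))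
      + (\<Sum>t<Suc d. c t * (\<Sum>q<L + n. \<Sum>s<m. (if q < t then \<beta> (t - 1 - q) s else 0) * u (q + j) $ s))"
    by (simp only: shifted_kernel_coeff_def distrib_right sum.distrib sum_sum_weighted_swap)
  also have "\<dots> = (\<Sum>t<Suc d. c t * (P1 t + P2 t + \<xi> \<bullet> (A ^\<^sub>m t *\<^sub>v x j)))
      - (\<Sum>t<Suc d. c t * (\<xi> \<bullet> (A ^\<^sub>m t *\<^sub>v x j)))"
    using window prefix by (simp add: distrib_left sum.distrib del: sum.lessThan_Suc)
  also have "\<dots> = 0" using step rel x_carrier j by simp
  finally show ?thesis unfolding \<beta>_def .
qed

lemma input_state_left_kernel_zero:
  fixes \<eta> :: "nat \<Rightarrow> nat \<Rightarrow> real"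
  assumes ctrb: "mrank (ctrb_mat n m A B) = n" and pe: "persistently_exciting m N u (L + n)"
    and NL: "L + n \<le> N" and \<xi>: "\<xi> \<in> carrier_vec n"
    and ker: "\<And>j. j + L \<le> N \<Longrightarrow> (\<Sum>k<L. \<Sum>s<m. \<eta> k s * u (k + j) $ s) + \<xi> \<bullet> x j = 0"
  shows "(\<forall>k<L. \<forall>s<m. \<eta> k s = 0) \<and> \<xi> = 0\<^sub>v n"
proof -
  obtain d c where dn: "d \<le> n" and cd: "c d = 1"
    and rel: "\<forall>w\<in>carrier_vec n. (\<Sum>t<Suc d. c t * (\<xi> \<bullet> (A ^\<^sub>m t *\<^sub>v w))) = 0"
    using pow_mat_functional_monic_relation[OF A \<xi>] by blast
  define W where "W q s = shifted_kernel_coeff c d L (\<lambda>k. \<eta> k s) (\<lambda>i. \<xi> \<bullet> (A ^\<^sub>m i *\<^sub>v col B s)) q"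
    for q s
  define w where "w = vec (m * (L + n)) (\<lambda>i. W (i div m) (i mod m))"
  have H: "hankel m (L + n) N u \<in> carrier_mat (m * (L + n)) (N - (L + n) + 1)" by (simp add: hankel_def)
  have "w = 0\<^sub>v (m * (L + n))"
  proof (rule mrank_full_row_imp_left_kernel_zero[OF H])
    show "mrank (hankel m (L + n) N u) = m * (L + n)" using pe unfolding persistently_exciting_def .
    show "w \<in> carrier_vec (m * (L + n))" by (simp add: w_def)
    show "\<forall>j<N - (L + n) + 1. (\<Sum>i<m * (L + n). w $ i * hankel m (L + n) N u $$ (i, j)) = 0"
    proof (intro allI impI)
      fix j assume j: "j < N - (L + n) + 1"
      have "(\<Sum>i<m * (L + n). w $ i * hankel m (L + n) N u $$ (i, j))
          = (\<Sum>q<L + n. \<Sum>s<m. W q s * u (q + j) $ s)"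
        unfolding sum_mult_hankel_col[OF j] using block_index_less by (intro sum.cong refl) (auto simp: w_def)
      also have "\<dots> = 0"
        unfolding W_def by (rule shifted_kernel_equation[OF \<xi> rel ker _ dn]) (use j NL in simp_all)
      finally show "(\<Sum>i<m * (L + n). w $ i * hankel m (L + n) N u $$ (i, j)) = 0" .
    qed
  qed
  have W0: "W q s = 0" if "q < L + n" "s < m" for q s
  proof -
    have "w $ (q * m + s) = 0" using \<open>w = 0\<^sub>v _\<close> block_index_less[OF that] by simp
    thus ?thesis using block_index_less[OF that] that unfolding w_def by simp
  qed
  have low: "(\<forall>k<L. \<eta> k s = 0) \<and> (\<forall>i<d. \<xi> \<bullet> (A ^\<^sub>m i *\<^sub>v col B s) = 0)" if "s < m" for s
    using shifted_kernel_coeff_eq_0_imp[where c = c and d = d and n = n and L = L, OF cd dn] W0 that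
    unfolding W_def by blast
  have "\<xi> = 0\<^sub>v n" using controllable_functional_eq_0[OF A B ctrb \<xi> cd rel] low by blast
  with low show ?thesis by blast
qed

definition input_state_data :: "nat \<Rightarrow> real mat" where
  "input_state_data L = mat (m * L + n) (N - L + 1)
    (\<lambda>(i, j). if i < m * L then u (i div m + j) $ (i mod m) else x j $ (i - m * L))"

lemma input_state_data_left_kernel_zero:
  assumes ctrb: "mrank (ctrb_mat n m A B) = n" and pe: "persistently_exciting m N u (L + n)"
    and NL: "L + n \<le> N" and w: "w \<in> carrier_vec (m * L + n)"
    and wM: "\<forall>j<N - L + 1. (\<Sum>i<m * L + n. w $ i * input_state_data L $$ (i, j)) = 0"
  shows "w = 0\<^sub>v (m * L + n)"
proof -
  define \<eta> where "\<eta> k s = w $ (k * m + s)" for k s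
  define \<xi> where "\<xi> = vec n (\<lambda>r. w $ (m * L + r))"
  have input: "input_state_data L $$ (k * m + s, j) = u (k + j) $ s" if "k < L" "s < m" "j + L \<le> N" for k s j
    using block_index_less[OF that(1,2)] that by (simp add: input_state_data_def)
  have "(\<Sum>k<L. \<Sum>s<m. \<eta> k s * u (k + j) $ s) + \<xi> \<bullet> x j = 0" if j: "j + L \<le> N" for j
  proof -
    have "(\<Sum>i<m * L + n. w $ i * input_state_data L $$ (i, j))
        = (\<Sum>k<L. \<Sum>s<m. \<eta> k s * u (k + j) $ s) + (\<Sum>r<n. w $ (m * L + r) * x j $ r)"
      unfolding sum_lessThan_add_split sum_lessThan_mult_split \<eta>_def
      using j input by (intro arg_cong2[where f = "(+)"] sum.cong refl) (auto simp: input_state_data_def)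
    moreover have "\<xi> \<bullet> x j = (\<Sum>r<n. w $ (m * L + r) * x j $ r)"
      using x_carrier[of j] j by (simp add: scalar_prod_def \<xi>_def atLeast0LessThan)
    ultimately show ?thesis using wM j by simp
  qed
  hence zero: "(\<forall>k<L. \<forall>s<m. \<eta> k s = 0) \<and> \<xi> = 0\<^sub>v n"
    by (intro input_state_left_kernel_zero[OF ctrb pe NL]) (simp_all add: \<xi>_def)
  show ?thesis
  proof (rule eq_vecI)
    fix i assume "i < dim_vec (0\<^sub>v (m * L + n) :: real vec)"
    hence i: "i < m * L + n" by simp
    show "w $ i = 0\<^sub>v (m * L + n) $ i"
    proof (cases "i < m * L")
      case True
      hence "0 < m" "i div m < L" by (auto simp: less_mult_imp_div_less mult.commute intro: Nat.gr0I)
      hence "\<eta> (i div m) (i mod m) = 0" using zero by simp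
      thus ?thesis using i unfolding \<eta>_def by simp
    next
      case False
      hence "m * L + (i - m * L) = i" by simp
      moreover have "\<xi> $ (i - m * L) = 0" using zero False i by simp
      ultimately show ?thesis using False i unfolding \<xi>_def by simp
    qed
  qed (use w in simp)
qed

text \<open>Willems' fundamental lemma, in the form: \<open>input_state_data L = [H_L(u); x_0 \<dots> x_(N-L)]\<close> has full
  row rank, so every input window together with every initial state is a column combination of the data.\<close>
lemma fundamental_lemma:
  assumes ctrb: "mrank (ctrb_mat n m A B) = n" and pe: "persistently_exciting m N u (L + n)"
    and NL: "L + n \<le> N"
    and ub: "\<forall>k<L. ub k \<in> carrier_vec m" and xb: "xb \<in> carrier_vec n"
  shows "\<exists>a\<in>carrier_vec (N - L + 1).
    (\<forall>k<L. hankel_comb m (N - L + 1) a u k = ub k) \<and> hankel_comb n (N - L + 1) a x 0 = xb"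
proof -
  define b where "b = vec (m * L + n) (\<lambda>i. if i < m * L then ub (i div m) $ (i mod m) else xb $ (i - m * L))"
  have M: "input_state_data L \<in> carrier_mat (m * L + n) (N - L + 1)" by (simp add: input_state_data_def)
  obtain a where a: "a \<in> carrier_vec (N - L + 1)" "input_state_data L *\<^sub>v a = b"
    using left_kernel_zero_imp_surj[OF M, of b] input_state_data_left_kernel_zero[OF ctrb pe NL]
    by (auto simp: b_def)
  have entry: "(\<Sum>j<N - L + 1. input_state_data L $$ (i, j) * a $ j) = b $ i" if "i < m * L + n" for i
    using a M that by (auto simp: scalar_prod_def atLeast0LessThan mult.commute)
  have "hankel_comb m (N - L + 1) a u k = ub k" if k: "k < L" for k
  proof (rule eq_vecI)
    fix s assume "s < dim_vec (ub k)"
    hence s: "s < m" using ub k by auto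
    have i: "k * m + s < m * L" using block_index_less k s by simp
    show "hankel_comb m (N - L + 1) a u k $ s = ub k $ s"
      using entry[of "k * m + s"] i s unfolding input_state_data_def b_def by (simp add: mult.commute)
  qed (use ub k in auto)
  moreover have "hankel_comb n (N - L + 1) a x 0 = xb"
  proof (rule eq_vecI)
    fix r assume "r < dim_vec xb"
    hence r: "r < n" using xb by auto
    show "hankel_comb n (N - L + 1) a x 0 $ r = xb $ r"
      using entry[of "m * L + r"] r unfolding input_state_data_def b_def by (simp add: mult.commute)
  qed (use xb in auto)
  ultimately show ?thesis using a(1) by blast
qed

end

section \<open>Trajectories as overlapping windows\<close>

definition windows_match ::
  "nat \<Rightarrow> nat \<Rightarrow> nat \<Rightarrow> nat \<Rightarrow> nat \<Rightarrow> (nat \<Rightarrow> real vec) \<Rightarrow> (nat \<Rightarrow> real vec) \<Rightarrow> (nat \<Rightarrow> real vec) \<Rightarrow> bool"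
  where "windows_match d L n xi K \<alpha> f fb \<longleftrightarrow>
    (\<forall>i\<in>{1..xi}. \<forall>k<L. fb ((i - 1) * (L - n) + k) = hankel_comb d K (\<alpha> i) f k)"

lemma window_cover:
  fixes t L n xi :: nat
  assumes t: "t < L + (xi - 1) * (L - n)" and xi1: "1 \<le> xi" and Ln: "n \<le> L"
  shows "\<exists>i k. 1 \<le> i \<and> i \<le> xi \<and> k < L \<and> t = (i - 1) * (L - n) + k"
proof (cases "L = n")
  case True
  then show ?thesis using t xi1 by (intro exI[of _ 1] exI[of _ t]) simp
next
  case False
  define q where "q = L - n"
  have q0: "0 < q" using False Ln by (simp add: q_def)
  define b where "b = min (t div q) (xi - 1)"
  have bq: "b * q \<le> t" using div_times_less_eq_dividend[of t q] unfolding b_def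
    by (meson le_trans min.cobounded1 mult_le_mono1)
  have "t - b * q < L"
  proof (cases "t div q \<le> xi - 1")
    case True
    hence "t - b * q = t mod q" by (simp add: b_def minus_div_mult_eq_mod)
    also have "\<dots> < q" using q0 by simp
    finally show ?thesis by (simp add: q_def)
  next
    case False
    hence "b * q = (xi - 1) * (L - n)" by (simp add: b_def q_def)
    thus ?thesis using t q0 unfolding q_def by linarith
  qed
  moreover have "b + 1 \<le> xi" using xi1 by (simp add: b_def)
  ultimately show ?thesis using bq by (intro exI[of _ "b + 1"] exI[of _ "t - b * q"]) (simp add: q_def)
qed

context lti_trajectory
begin

lemma hankel_comb_state_eq_if_io_eq:
  assumes obs: "mrank (obsv_mat n p A C) = n" and K: "k0 + n + K \<le> Suc N"
    and io: "\<forall>k<n. hankel_comb m K a u (k0 + k) = hankel_comb m K b u k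
                 \<and> hankel_comb p K a y (k0 + k) = hankel_comb p K b y k"
  shows "hankel_comb n K a x k0 = hankel_comb n K b x 0"
proof -
  have "hankel_comb n K a x (k0 + 0) = hankel_comb n K b x 0"
  proof (rule observable_initial_state_unique[where X = "\<lambda>k. hankel_comb n K a x (k0 + k)"
        and Y = "\<lambda>k. hankel_comb n K b x k" and U = "\<lambda>k. hankel_comb m K b u k", OF A B C D obs])
    show "\<forall>k<n. hankel_comb m K b u k \<in> carrier_vec m \<and>
        hankel_comb n K a x (k0 + Suc k) = A *\<^sub>v hankel_comb n K a x (k0 + k) + B *\<^sub>v hankel_comb m K b u k \<and>
        hankel_comb n K b x (Suc k) = A *\<^sub>v hankel_comb n K b x k + B *\<^sub>v hankel_comb m K b u k \<and>
        C *\<^sub>v hankel_comb n K a x (k0 + k) + D *\<^sub>v hankel_comb m K b u k =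
        C *\<^sub>v hankel_comb n K b x k + D *\<^sub>v hankel_comb m K b u k"
    proof (intro allI impI conjI)
      fix k assume k: "k < n"
      have k1: "k0 + k + K \<le> N" and k2: "k + K \<le> N" using k K by auto
      show "hankel_comb m K b u k \<in> carrier_vec m" by simp
      show "hankel_comb n K a x (k0 + Suc k) = A *\<^sub>v hankel_comb n K a x (k0 + k) + B *\<^sub>v hankel_comb m K b u k"
        using hankel_comb_state_step[OF k1, of a] io k by simp
      show "hankel_comb n K b x (Suc k) = A *\<^sub>v hankel_comb n K b x k + B *\<^sub>v hankel_comb m K b u k"
        using hankel_comb_state_step[OF k2] by simp
      show "C *\<^sub>v hankel_comb n K a x (k0 + k) + D *\<^sub>v hankel_comb m K b u k =
          C *\<^sub>v hankel_comb n K b x k + D *\<^sub>v hankel_comb m K b u k"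
        using hankel_comb_output[OF k1, of a] hankel_comb_output[OF k2, of b] io k by simp
    qed
  qed simp_all
  thus ?thesis by simp
qed

lemma trajectory_window_eq_hankel_comb:
  assumes ctrb: "mrank (ctrb_mat n m A B) = n" and pe: "persistently_exciting m N u (L + n)"
    and NL: "L + n \<le> N" and tr: "is_trajectory n m p A B C D T ub yb" and sT: "s + L \<le> T"
  shows "\<exists>a\<in>carrier_vec (N - L + 1).
    \<forall>k<L. ub (s + k) = hankel_comb m (N - L + 1) a u k \<and> yb (s + k) = hankel_comb p (N - L + 1) a y k"
proof -
  from tr obtain xb where ubc: "\<forall>k<T. ub k \<in> carrier_vec m"
    and xb0: "xb 0 \<in> carrier_vec n"
    and dynb: "\<forall>k<T. xb (Suc k) = A *\<^sub>v xb k + B *\<^sub>v ub k \<and> yb k = C *\<^sub>v xb k + D *\<^sub>v ub k"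
    unfolding is_trajectory_def by blast
  have xs: "xb s \<in> carrier_vec n"
    using sT
  proof (induction s)
    case (Suc s)
    thus ?case using dynb A B ubc by auto
  qed (use xb0 in simp)
  define K where "K = N - L + 1"
  have kK: "k + K \<le> N" if "k < L" for k using that NL by (simp add: K_def)
  obtain a where a: "a \<in> carrier_vec K" "\<forall>k<L. hankel_comb m K a u k = ub (s + k)"
    "hankel_comb n K a x 0 = xb s"
    using fundamental_lemma[OF ctrb pe NL _ xs, of "\<lambda>k. ub (s + k)"] ubc sT unfolding K_def by auto
  have state: "hankel_comb n K a x k = xb (s + k)" if "k \<le> L" for k
    using that
  proof (induction k)
    case (Suc k)
    hence k: "k < L" by simp
    have "hankel_comb n K a x (Suc k) = A *\<^sub>v hankel_comb n K a x k + B *\<^sub>v hankel_comb m K a u k"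
      using hankel_comb_state_step kK[OF k] by simp
    also have "\<dots> = xb (Suc (s + k))" using Suc k a dynb sT by simp
    finally show ?case by simp
  qed (use a in simp)
  have "yb (s + k) = hankel_comb p K a y k" if k: "k < L" for k
    using hankel_comb_output[OF kK[OF k]] state[of k] a dynb sT k by simp
  thus ?thesis using a unfolding K_def by (intro bexI[of _ a]) auto
qed

lemma trajectory_imp_windows:
  assumes ctrb: "mrank (ctrb_mat n m A B) = n" and pe: "persistently_exciting m N u (L + n)"
    and NL: "L + n \<le> N" and T: "T = L + (xi - 1) * (L - n)"
    and tr: "is_trajectory n m p A B C D T ub yb"
  shows "\<exists>\<alpha>. (\<forall>i\<in>{1..xi}. \<alpha> i \<in> carrier_vec (N - L + 1))
    \<and> windows_match m L n xi (N - L + 1) \<alpha> u ub \<and> windows_match p L n xi (N - L + 1) \<alpha> y yb"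
proof -
  have "\<exists>a\<in>carrier_vec (N - L + 1). \<forall>k<L. ub ((i - 1) * (L - n) + k) = hankel_comb m (N - L + 1) a u k
      \<and> yb ((i - 1) * (L - n) + k) = hankel_comb p (N - L + 1) a y k" if i: "i \<in> {1..xi}" for i
  proof (rule trajectory_window_eq_hankel_comb[OF ctrb pe NL tr])
    have "(i - 1) * (L - n) \<le> (xi - 1) * (L - n)" using i by (intro mult_le_mono1) auto
    thus "(i - 1) * (L - n) + L \<le> T" using T by simp
  qed
  then obtain \<alpha> where "\<forall>i\<in>{1..xi}. \<alpha> i \<in> carrier_vec (N - L + 1) \<and>
      (\<forall>k<L. ub ((i - 1) * (L - n) + k) = hankel_comb m (N - L + 1) (\<alpha> i) u k
          \<and> yb ((i - 1) * (L - n) + k) = hankel_comb p (N - L + 1) (\<alpha> i) y k)"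
    by metis
  thus ?thesis unfolding windows_match_def by blast
qed

lemma windows_overlap_state_eq:
  assumes obs: "mrank (obsv_mat n p A C) = n" and NL: "L + n \<le> N" and Ln: "n \<le> L"
    and Wu: "windows_match m L n xi (N - L + 1) \<alpha> u ub" and Wy: "windows_match p L n xi (N - L + 1) \<alpha> y yb"
    and i: "1 \<le> i" "Suc i \<le> xi"
  shows "hankel_comb n (N - L + 1) (\<alpha> i) x (L - n) = hankel_comb n (N - L + 1) (\<alpha> (Suc i)) x 0"
proof (rule hankel_comb_state_eq_if_io_eq[OF obs])
  show "L - n + n + (N - L + 1) \<le> Suc N" using NL Ln by simp
  show "\<forall>k<n. hankel_comb m (N - L + 1) (\<alpha> i) u (L - n + k) = hankel_comb m (N - L + 1) (\<alpha> (Suc i)) u k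
    \<and> hankel_comb p (N - L + 1) (\<alpha> i) y (L - n + k) = hankel_comb p (N - L + 1) (\<alpha> (Suc i)) y k"
  proof (intro allI impI)
    fix k assume k: "k < n"
    have "L - n + k < L" "k < L" "i \<in> {1..xi}" "Suc i \<in> {1..xi}" using k Ln i by auto
    hence "ub ((i - 1) * (L - n) + (L - n + k)) = hankel_comb m (N - L + 1) (\<alpha> i) u (L - n + k)"
      "yb ((i - 1) * (L - n) + (L - n + k)) = hankel_comb p (N - L + 1) (\<alpha> i) y (L - n + k)"
      "ub ((Suc i - 1) * (L - n) + k) = hankel_comb m (N - L + 1) (\<alpha> (Suc i)) u k"
      "yb ((Suc i - 1) * (L - n) + k) = hankel_comb p (N - L + 1) (\<alpha> (Suc i)) y k"
      using Wu Wy unfolding windows_match_def by blast+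
    moreover have "(i - 1) * (L - n) + (L - n + k) = (Suc i - 1) * (L - n) + k" using i by (cases i) auto
    ultimately show "hankel_comb m (N - L + 1) (\<alpha> i) u (L - n + k) = hankel_comb m (N - L + 1) (\<alpha> (Suc i)) u k
      \<and> hankel_comb p (N - L + 1) (\<alpha> i) y (L - n + k) = hankel_comb p (N - L + 1) (\<alpha> (Suc i)) y k"
      by metis
  qed
qed

text \<open>The windows are glued by propagating a state: observability forces the state reached where
  an overlap begins to be the initial state of the next window.\<close>
lemma windows_imp_trajectory:
  assumes obs: "mrank (obsv_mat n p A C) = n"
    and NL: "L + n \<le> N" and Ln: "n \<le> L" and xi1: "1 \<le> xi"
    and T: "T = L + (xi - 1) * (L - n)"
    and ubc: "\<forall>k<T. ub k \<in> carrier_vec m" and ybc: "\<forall>k<T. yb k \<in> carrier_vec p"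
    and Wu: "windows_match m L n xi (N - L + 1) \<alpha> u ub" and Wy: "windows_match p L n xi (N - L + 1) \<alpha> y yb"
  shows "is_trajectory n m p A B C D T ub yb"
proof -
  define K where "K = N - L + 1"
  have kK: "k + K \<le> N" if "k < L" for k using that NL by (simp add: K_def)
  have W: "ub ((i - 1) * (L - n) + k) = hankel_comb m K (\<alpha> i) u k
      \<and> yb ((i - 1) * (L - n) + k) = hankel_comb p K (\<alpha> i) y k"
    if "1 \<le> i" "i \<le> xi" "k < L" for i k using Wu Wy that unfolding windows_match_def K_def by auto
  define xb where "xb = rec_nat (hankel_comb n K (\<alpha> 1) x 0) (\<lambda>t v. A *\<^sub>v v + B *\<^sub>v ub t)"
  have xb0: "xb 0 = hankel_comb n K (\<alpha> 1) x 0" and xbS: "xb (Suc t) = A *\<^sub>v xb t + B *\<^sub>v ub t" for t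
    by (simp_all add: xb_def)
  have in_window: "xb ((i - 1) * (L - n) + k) = hankel_comb n K (\<alpha> i) x k"
    if i: "1 \<le> i" "i \<le> xi" and init: "xb ((i - 1) * (L - n)) = hankel_comb n K (\<alpha> i) x 0"
      and k: "k \<le> L" for i k
    using k
  proof (induction k)
    case (Suc k)
    hence k: "k < L" by simp
    have "xb ((i - 1) * (L - n) + Suc k) = A *\<^sub>v xb ((i - 1) * (L - n) + k) + B *\<^sub>v ub ((i - 1) * (L - n) + k)"
      using xbS by simp
    also have "\<dots> = hankel_comb n K (\<alpha> i) x (Suc k)"
      using Suc k W[OF i k] hankel_comb_state_step[OF kK[OF k]] by simp
    finally show ?case .
  qed (use init in simp)
  have window_start: "xb (i * (L - n)) = hankel_comb n K (\<alpha> (Suc i)) x 0" if "Suc i \<le> xi" for i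
    using that
  proof (induction i)
    case (Suc i)
    have i: "1 \<le> Suc i" "Suc i \<le> xi" using Suc.prems by auto
    have "xb (Suc i * (L - n)) = xb (i * (L - n) + (L - n))" by (simp add: add.commute)
    also have "\<dots> = hankel_comb n K (\<alpha> (Suc i)) x (L - n)"
      using in_window[OF i, of "L - n"] Suc by simp
    also have "\<dots> = hankel_comb n K (\<alpha> (Suc (Suc i))) x 0"
      using windows_overlap_state_eq[OF obs NL Ln Wu Wy, of "Suc i"] Suc.prems unfolding K_def by simp
    finally show ?case .
  qed (use xb0 in simp)
  have "yb t = C *\<^sub>v xb t + D *\<^sub>v ub t" if t: "t < T" for t
  proof -
    obtain i k where ik: "1 \<le> i" "i \<le> xi" "k < L" "t = (i - 1) * (L - n) + k"
      using window_cover[of t L xi n] t T xi1 Ln by auto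
    have "xb t = hankel_comb n K (\<alpha> i) x k"
      using in_window[OF ik(1,2) _, of k] window_start[of "i - 1"] ik by simp
    thus ?thesis using W[OF ik(1,2,3)] hankel_comb_output[OF kK[OF ik(3)]] ik(4) by simp
  qed
  thus ?thesis unfolding is_trajectory_def using ubc ybc xb0 xbS by (intro conjI exI[of _ xb]) auto
qed

lemma trajectory_iff_windows:
  assumes ctrb: "mrank (ctrb_mat n m A B) = n" and obs: "mrank (obsv_mat n p A C) = n"
    and pe: "persistently_exciting m N u (L + n)"
    and NL: "L + n \<le> N" and Ln: "n \<le> L" and xi1: "1 \<le> xi"
    and T: "T = L + (xi - 1) * (L - n)"
    and ubc: "\<forall>k<T. ub k \<in> carrier_vec m" and ybc: "\<forall>k<T. yb k \<in> carrier_vec p"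
  shows "is_trajectory n m p A B C D T ub yb \<longleftrightarrow>
    (\<exists>\<alpha>. (\<forall>i\<in>{1..xi}. \<alpha> i \<in> carrier_vec (N - L + 1))
       \<and> windows_match m L n xi (N - L + 1) \<alpha> u ub \<and> windows_match p L n xi (N - L + 1) \<alpha> y yb)"
  using trajectory_imp_windows[OF ctrb pe NL T] windows_imp_trajectory[OF obs NL Ln xi1 T ubc ybc]
  by blast

end

text \<open>\<open>stack_seq d K g\<close> is \<open>stack d g 0 (K - 1)\<close> without the truncated subtraction, so it is also
  meaningful for \<open>K = 0\<close>.\<close>
definition stack_seq :: "nat \<Rightarrow> nat \<Rightarrow> (nat \<Rightarrow> real vec) \<Rightarrow> real vec" where
  "stack_seq d K g = vec (d * K) (\<lambda>i. g (i div d) $ (i mod d))"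

lemma stack_seq_carrier[simp]: "stack_seq d K g \<in> carrier_vec (d * K)"
  and dim_stack_seq[simp]: "dim_vec (stack_seq d K g) = d * K"
  by (auto simp: stack_seq_def)

lemma stack_eq_stack_seq: "1 \<le> T \<Longrightarrow> stack d g 0 (T - 1) = stack_seq d T g"
  unfolding stack_def stack_seq_def by simp

lemma stack_seq_append: "stack_seq d K g @\<^sub>v stack_seq d K' (\<lambda>k. g (K + k)) = stack_seq d (K + K') g"
proof (rule eq_vecI)
  fix i assume "i < dim_vec (stack_seq d (K + K') g)"
  hence i: "i < d * K + d * K'" by (simp add: distrib_left)
  show "(stack_seq d K g @\<^sub>v stack_seq d K' (\<lambda>k. g (K + k))) $ i = stack_seq d (K + K') g $ i"
  proof (cases "i < d * K")
    case False
    define j where "j = i - d * K"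
    have "i = j + K * d" using False by (simp add: j_def mult.commute)
    moreover have "0 < d" using i False by (cases d) auto
    ultimately have "i div d = K + j div d" "i mod d = j mod d" by simp_all
    thus ?thesis using i False by (simp add: stack_seq_def distrib_left j_def)
  qed (use i in \<open>simp add: stack_seq_def distrib_left\<close>)
qed (simp add: distrib_left)

lemma stack_seq_eq_iff: "stack_seq d K g = stack_seq d K h \<longleftrightarrow> (\<forall>k<K. \<forall>s<d. g k $ s = h k $ s)"
proof
  assume e: "stack_seq d K g = stack_seq d K h"
  show "\<forall>k<K. \<forall>s<d. g k $ s = h k $ s"
  proof (intro allI impI)
    fix k s assume k: "k < K" and s: "s < d"
    have "stack_seq d K g $ (k * d + s) = stack_seq d K h $ (k * d + s)" using e by simp
    thus "g k $ s = h k $ s" using block_index_less[OF k s] s by (simp add: stack_seq_def)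
  qed
next
  assume h: "\<forall>k<K. \<forall>s<d. g k $ s = h k $ s"
  show "stack_seq d K g = stack_seq d K h"
  proof (rule eq_vecI)
    fix i assume "i < dim_vec (stack_seq d K h)"
    hence i: "i < d * K" by simp
    hence "0 < d" by (cases d) auto
    hence "i div d < K" "i mod d < d" using i by (simp_all add: less_mult_imp_div_less mult.commute)
    thus "stack_seq d K g $ i = stack_seq d K h $ i" using i h by (simp add: stack_seq_def)
  qed simp
qed

lemma hankel_mult_eq_stack_seq:
  assumes a: "a \<in> carrier_vec (Nx - K + 1)"
  shows "hankel d K Nx f *\<^sub>v a = stack_seq d K (hankel_comb d (Nx - K + 1) a f)"
proof (rule eq_vecI)
  fix i assume "i < dim_vec (stack_seq d K (hankel_comb d (Nx - K + 1) a f))"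
  hence i: "i < d * K" by simp
  hence "i mod d < d" by (cases d) auto
  thus "(hankel d K Nx f *\<^sub>v a) $ i = stack_seq d K (hankel_comb d (Nx - K + 1) a f) $ i"
    using i a by (simp add: hankel_def stack_seq_def scalar_prod_def atLeast0LessThan mult.commute)
qed (simp add: hankel_def)

lemma foldr_append_vec_carrier:
  "(\<forall>v\<in>set vs. v \<in> carrier_vec c) \<Longrightarrow> foldr (@\<^sub>v) vs (vec 0 f) \<in> carrier_vec (length vs * c)"
  by (induction vs) auto

lemma append_vec_assoc: "(a @\<^sub>v b) @\<^sub>v c = a @\<^sub>v (b @\<^sub>v (c :: real vec))"
  by (rule eq_vecI) auto

lemma foldr_append_stack_seq_eq_iff:
  "(foldr (@\<^sub>v) (map (\<lambda>i. stack_seq d K (g i)) [a..<a + c]) (vec 0 f) = stack_seq d (c * K) w) \<longleftrightarrow>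
   (\<forall>i<c. \<forall>k<K. \<forall>s<d. g (a + i) k $ s = w (i * K + k) $ s)"
proof (induction c arbitrary: a w)
  case 0
  have "vec 0 f = stack_seq d 0 w" by (rule eq_vecI) auto
  then show ?case by simp
next
  case (Suc c)
  have ups: "[a..<a + Suc c] = a # [Suc a..<Suc a + c]" by (simp add: upt_conv_Cons)
  have split: "stack_seq d (Suc c * K) w = stack_seq d K w @\<^sub>v stack_seq d (c * K) (\<lambda>k. w (K + k))"
    using stack_seq_append[of d K w "c * K"] by simp
  have "(foldr (@\<^sub>v) (map (\<lambda>i. stack_seq d K (g i)) [a..<a + Suc c]) (vec 0 f)
        = stack_seq d (Suc c * K) w)
     \<longleftrightarrow> stack_seq d K (g a) = stack_seq d K w \<and>
       foldr (@\<^sub>v) (map (\<lambda>i. stack_seq d K (g i)) [Suc a..<Suc a + c]) (vec 0 f)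
         = stack_seq d (c * K) (\<lambda>k. w (K + k))"
    unfolding ups split by (simp add: append_vec_eq[of _ "d * K"])
  also have "\<dots> \<longleftrightarrow> (\<forall>k<K. \<forall>s<d. g a k $ s = w k $ s) \<and>
       (\<forall>i<c. \<forall>k<K. \<forall>s<d. g (Suc a + i) k $ s = w (K + (i * K + k)) $ s)"
    unfolding Suc.IH stack_seq_eq_iff ..
  also have "\<dots> \<longleftrightarrow> (\<forall>i<Suc c. \<forall>k<K. \<forall>s<d. g (a + i) k $ s = w (i * K + k) $ s)"
    unfolding All_less_Suc2 by (simp add: add.assoc)
  finally show ?case .
qed

lemma diag_block_mat_replicate_mult:
  fixes H :: "real mat"
  shows "(\<forall>v\<in>set vs. v \<in> carrier_vec (dim_col H)) \<Longrightarrow>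
    diag_block_mat (replicate (length vs) H) *\<^sub>v foldr (@\<^sub>v) vs (vec 0 f)
      = foldr (@\<^sub>v) (map (\<lambda>v. H *\<^sub>v v) vs) (vec 0 f)"
proof (induction vs)
  case Nil
  show ?case by (rule eq_vecI) auto
next
  case (Cons v vs)
  define Bm where "Bm = diag_block_mat (replicate (length vs) H)"
  have dB: "dim_row Bm = length vs * dim_row H" "dim_col Bm = length vs * dim_col H"
    unfolding Bm_def dim_diag_block_mat map_replicate sum_list_replicate by simp_all
  have Bm: "Bm \<in> carrier_mat (dim_row Bm) (dim_col Bm)" and H: "H \<in> carrier_mat (dim_row H) (dim_col H)"
    by auto
  have v: "v \<in> carrier_vec (dim_col H)" using Cons.prems by simp
  have r: "foldr (@\<^sub>v) vs (vec 0 f) \<in> carrier_vec (dim_col Bm)"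
    using foldr_append_vec_carrier[of vs "dim_col H" f] Cons.prems dB by simp
  have "diag_block_mat (replicate (length (v # vs)) H) *\<^sub>v foldr (@\<^sub>v) (v # vs) (vec 0 f)
     = four_block_mat H (0\<^sub>m (dim_row H) (dim_col Bm)) (0\<^sub>m (dim_row Bm) (dim_col H)) Bm
       *\<^sub>v (v @\<^sub>v foldr (@\<^sub>v) vs (vec 0 f))"
    by (simp add: Bm_def Let_def)
  also have "\<dots> = (H *\<^sub>v v + 0\<^sub>m (dim_row H) (dim_col Bm) *\<^sub>v foldr (@\<^sub>v) vs (vec 0 f)) @\<^sub>v
       (0\<^sub>m (dim_row Bm) (dim_col H) *\<^sub>v v + Bm *\<^sub>v foldr (@\<^sub>v) vs (vec 0 f))"
    by (rule four_block_mat_mult_vec[OF H _ _ Bm v r]) auto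
  also have "\<dots> = (H *\<^sub>v v) @\<^sub>v (Bm *\<^sub>v foldr (@\<^sub>v) vs (vec 0 f))"
    using v r by (intro arg_cong2[where f = "(@\<^sub>v)"] eq_vecI) auto
  finally show ?case using Cons by (simp add: Bm_def)
qed

lemma vstack_mult:
  fixes X Y :: "real mat"
  assumes dY: "dim_col Y = dim_col X" and v: "v \<in> carrier_vec (dim_col X)"
  shows "vstack X Y *\<^sub>v v = (X *\<^sub>v v) @\<^sub>v (Y *\<^sub>v v)"
proof (rule eq_vecI)
  fix i assume "i < dim_vec ((X *\<^sub>v v) @\<^sub>v (Y *\<^sub>v v))"
  hence i: "i < dim_row X + dim_row Y" by simp
  have row: "row (vstack X Y) i = (if i < dim_row X then row X i else row Y (i - dim_row X))"
    using i dY by (intro eq_vecI) (auto simp: vstack_def four_block_mat_def Let_def)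
  show "(vstack X Y *\<^sub>v v) $ i = ((X *\<^sub>v v) @\<^sub>v (Y *\<^sub>v v)) $ i"
    using i row v by (simp add: vstack_def four_block_mat_def Let_def)
qed (simp add: vstack_def four_block_mat_def Let_def)

lemma bdiag_mult:
  fixes X Y :: "real mat"
  assumes a: "a \<in> carrier_vec (dim_col X)" and b: "b \<in> carrier_vec (dim_col Y)"
  shows "bdiag X Y *\<^sub>v (a @\<^sub>v b) = (X *\<^sub>v a) @\<^sub>v (Y *\<^sub>v b)"
proof -
  have "bdiag X Y *\<^sub>v (a @\<^sub>v b) = (X *\<^sub>v a + 0\<^sub>m (dim_row X) (dim_col Y) *\<^sub>v b) @\<^sub>v
       (0\<^sub>m (dim_row Y) (dim_col X) *\<^sub>v a + Y *\<^sub>v b)"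
    unfolding bdiag_def by (rule four_block_mat_mult_vec[OF _ _ _ _ a b]) auto
  also have "\<dots> = (X *\<^sub>v a) @\<^sub>v (Y *\<^sub>v b)"
    using a b by (intro arg_cong2[where f = "(@\<^sub>v)"] eq_vecI) auto
  finally show ?thesis .
qed

lemma dim_bdiag: "dim_col (bdiag X Y) = dim_col X + dim_col Y" "dim_row (bdiag X Y) = dim_row X + dim_row Y"
  by (simp_all add: bdiag_def)

lemma dim_vstack: "dim_col (vstack X Y) = dim_col X" "dim_row (vstack X Y) = dim_row X + dim_row Y"
  by (simp_all add: vstack_def)

lemma dim_kron_id: "dim_col (kron_id k M) = k * dim_col M" "dim_row (kron_id k M) = k * dim_row M"
  by (simp_all add: kron_id_def dim_diag_block_mat map_replicate sum_list_replicate)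

section \<open>The data matrix\<close>

text \<open>\<open>[H_L(f) 0; 0 I_(\<xi>-1) \<otimes> H_(L-n)(f_[n,N-1])]\<close>: the rows of the data matrix of the theorem
  that belong to the signal \<open>f\<close>.\<close>
abbreviation block_hankel :: "nat \<Rightarrow> nat \<Rightarrow> nat \<Rightarrow> nat \<Rightarrow> nat \<Rightarrow> (nat \<Rightarrow> real vec) \<Rightarrow> real mat" where
  "block_hankel d L n N xi f \<equiv>
     vstack (bdiag (hankel d L N f) (0\<^sub>m 0 ((xi - 1) * (N - L + 1))))
       (bdiag (0\<^sub>m 0 (N - L + 1)) (kron_id (xi - 1) (hankel d (L - n) (N - n) (subseq f n))))"

lemma dim_block_hankel:
  assumes "n \<le> L" and "1 \<le> xi"
  shows "dim_col (block_hankel d L n N xi f) = xi * (N - L + 1)"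
    and "dim_row (block_hankel d L n N xi f) = d * (L + (xi - 1) * (L - n))"
proof -
  obtain k where "xi = Suc k" using assms(2) by (cases xi) auto
  moreover have "N - n - (L - n) = N - L" using assms(1) by simp
  ultimately show "dim_col (block_hankel d L n N xi f) = xi * (N - L + 1)"
    by (simp add: dim_vstack dim_bdiag dim_kron_id hankel_def)
  show "dim_row (block_hankel d L n N xi f) = d * (L + (xi - 1) * (L - n))"
    by (simp add: dim_vstack dim_bdiag dim_kron_id hankel_def distrib_left mult.left_commute)
qed

lemma stack_vecs_carrier:
  assumes "\<forall>i\<in>{1..xi}. \<alpha> i \<in> carrier_vec K"
  shows "stack_vecs \<alpha> xi \<in> carrier_vec (xi * K)"
  using foldr_append_vec_carrier[of "map \<alpha> [1..<xi + 1]" K] assms unfolding stack_vecs_def by auto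

lemma block_hankel_mult:
  assumes xi1: "1 \<le> xi" and Ln: "n \<le> L" and NL: "L + n \<le> N"
    and ac: "\<forall>i\<in>{1..xi}. \<alpha> i \<in> carrier_vec (N - L + 1)"
  shows "block_hankel d L n N xi f *\<^sub>v stack_vecs \<alpha> xi
    = stack_seq d L (hankel_comb d (N - L + 1) (\<alpha> 1) f) @\<^sub>v
      foldr (@\<^sub>v) (map (\<lambda>i. stack_seq d (L - n) (\<lambda>k. hankel_comb d (N - L + 1) (\<alpha> i) f (n + k)))
        [2..<2 + (xi - 1)]) (vec 0 (\<lambda>_. 0))"
proof -
  define K where "K = N - L + 1"
  define R where "R = foldr (@\<^sub>v) (map \<alpha> [2..<xi + 1]) (vec 0 (\<lambda>_. 0))"
  define H where "H = hankel d (L - n) (N - n) (subseq f n)"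
  have KK: "N - n - (L - n) + 1 = K" using Ln NL by (simp add: K_def)
  have a1: "\<alpha> 1 \<in> carrier_vec K" using ac xi1 by (simp add: K_def)
  have "[1..<xi + 1] = 1 # [Suc 1..<xi + 1]" by (rule upt_conv_Cons) (use xi1 in simp)
  hence S: "stack_vecs \<alpha> xi = \<alpha> 1 @\<^sub>v R" unfolding stack_vecs_def R_def Suc_1 by simp
  have rest: "\<forall>v\<in>set (map \<alpha> [2..<xi + 1]). v \<in> carrier_vec K" using ac by (auto simp: K_def)
  have len: "length (map \<alpha> [2..<xi + 1]) = xi - 1" by (simp only: length_map length_upt)
  hence R: "R \<in> carrier_vec ((xi - 1) * K)"
    using foldr_append_vec_carrier[OF rest] unfolding R_def by metis
  have dH: "dim_col H = K" using KK by (simp add: H_def hankel_def)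
  have dK: "dim_col (kron_id (xi - 1) H) = (xi - 1) * K" by (simp add: dim_kron_id dH)
  have dH1: "dim_col (hankel d L N f) = K" by (simp add: hankel_def K_def)
  have aR: "\<alpha> 1 @\<^sub>v R \<in> carrier_vec (K + (xi - 1) * K)" using a1 R by simp
  have "block_hankel d L n N xi f *\<^sub>v (\<alpha> 1 @\<^sub>v R)
      = (bdiag (hankel d L N f) (0\<^sub>m 0 ((xi - 1) * K)) *\<^sub>v (\<alpha> 1 @\<^sub>v R)) @\<^sub>v
        (bdiag (0\<^sub>m 0 K) (kron_id (xi - 1) H) *\<^sub>v (\<alpha> 1 @\<^sub>v R))"
    unfolding K_def[symmetric] H_def[symmetric]
    by (rule vstack_mult) (use dK dH1 aR in \<open>simp_all add: dim_bdiag\<close>)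
  also have "bdiag (hankel d L N f) (0\<^sub>m 0 ((xi - 1) * K)) *\<^sub>v (\<alpha> 1 @\<^sub>v R) = hankel d L N f *\<^sub>v \<alpha> 1"
    using bdiag_mult[of "\<alpha> 1" "hankel d L N f" R "0\<^sub>m 0 ((xi - 1) * K)"] a1 R
    by (auto simp: hankel_def K_def intro!: eq_vecI)
  also have "bdiag (0\<^sub>m 0 K) (kron_id (xi - 1) H) *\<^sub>v (\<alpha> 1 @\<^sub>v R) = kron_id (xi - 1) H *\<^sub>v R"
    using bdiag_mult[of "\<alpha> 1" "0\<^sub>m 0 K" R "kron_id (xi - 1) H"] a1 R dK by (auto intro!: eq_vecI)
  also have "hankel d L N f *\<^sub>v \<alpha> 1 = stack_seq d L (hankel_comb d K (\<alpha> 1) f)"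
    unfolding K_def by (rule hankel_mult_eq_stack_seq) (use a1 in \<open>simp add: K_def\<close>)
  also have "kron_id (xi - 1) H *\<^sub>v R = foldr (@\<^sub>v) (map (\<lambda>v. H *\<^sub>v v) (map \<alpha> [2..<xi + 1])) (vec 0 (\<lambda>_. 0))"
    unfolding kron_id_def R_def len[symmetric]
    by (rule diag_block_mat_replicate_mult) (use rest dH in simp)
  also have "map (\<lambda>v. H *\<^sub>v v) (map \<alpha> [2..<xi + 1])
      = map (\<lambda>i. stack_seq d (L - n) (\<lambda>k. hankel_comb d K (\<alpha> i) f (n + k))) [2..<2 + (xi - 1)]"
  proof -
    have block: "H *\<^sub>v \<alpha> i = stack_seq d (L - n) (\<lambda>k. hankel_comb d K (\<alpha> i) f (n + k))"
      if "i \<in> set [2..<xi + 1]" for i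
    proof -
      have "\<alpha> i \<in> carrier_vec (N - n - (L - n) + 1)" using that ac KK by (auto simp: K_def)
      from hankel_mult_eq_stack_seq[OF this, of d "subseq f n"]
      show ?thesis unfolding H_def KK by (simp add: hankel_comb_subseq)
    qed
    have "[2..<xi + 1] = [2..<2 + (xi - 1)]" by (rule arg_cong[of _ _ "upt 2"]) (use xi1 in simp)
    thus ?thesis unfolding map_map comp_def by (metis (no_types, lifting) block map_cong)
  qed
  finally show ?thesis unfolding S K_def .
qed

lemma block_hankel_mult_eq_stack_iff:
  assumes xi1: "1 \<le> xi" and Ln: "n \<le> L" and NL: "L + n \<le> N" and L1: "1 \<le> L"
    and ac: "\<forall>i\<in>{1..xi}. \<alpha> i \<in> carrier_vec (N - L + 1)"
  shows "block_hankel d L n N xi f *\<^sub>v stack_vecs \<alpha> xi = stack d fb 0 (L + (xi - 1) * (L - n) - 1)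
   \<longleftrightarrow> (\<forall>k<L. \<forall>s<d. hankel_comb d (N - L + 1) (\<alpha> 1) f k $ s = fb k $ s) \<and>
       (\<forall>i<xi - 1. \<forall>k<L - n. \<forall>s<d.
          hankel_comb d (N - L + 1) (\<alpha> (2 + i)) f (n + k) $ s = fb (L + (i * (L - n) + k)) $ s)"
proof -
  have stack_split: "stack d fb 0 (L + (xi - 1) * (L - n) - 1)
      = stack_seq d L fb @\<^sub>v stack_seq d ((xi - 1) * (L - n)) (\<lambda>k. fb (L + k))"
    using stack_eq_stack_seq[of "L + (xi - 1) * (L - n)" d fb] L1 stack_seq_append by simp
  have append_eq: "stack_seq d L (hankel_comb d (N - L + 1) (\<alpha> 1) f) @\<^sub>v V
      = stack_seq d L fb @\<^sub>v W \<longleftrightarrow> stack_seq d L (hankel_comb d (N - L + 1) (\<alpha> 1) f) = stack_seq d L fb \<and> V = W"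
    for V W by (rule append_vec_eq[where n = "d * L"]) simp_all
  show ?thesis
    unfolding block_hankel_mult[OF xi1 Ln NL ac] stack_split append_eq stack_seq_eq_iff
      foldr_append_stack_seq_eq_iff
    by (simp del: index_hankel_comb)
qed

lemma overlap_hankel_eq_iff:
  assumes a: "a \<in> carrier_vec (N - L + 1)" and b: "b \<in> carrier_vec (N - L + 1)"
  shows "hankel d n (N - L + n) (subseq f (L - n)) *\<^sub>v a = hankel d n (N - L + n) f *\<^sub>v b \<longleftrightarrow>
    (\<forall>k<n. \<forall>s<d. hankel_comb d (N - L + 1) a f (L - n + k) $ s = hankel_comb d (N - L + 1) b f k $ s)"
proof -
  have e: "N - L + n - n + 1 = N - L + 1" by simp
  show ?thesis
    using hankel_mult_eq_stack_seq[of a "N - L + n" n d] hankel_mult_eq_stack_seq[of b "N - L + n" n d] a b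
    by (simp add: e hankel_comb_subseq stack_seq_eq_iff del: index_hankel_comb)
qed

lemma windows_of_first_window_tails_overlaps:
  fixes g :: "nat \<Rightarrow> nat \<Rightarrow> real vec" and fb :: "nat \<Rightarrow> real vec"
  assumes Ln: "n \<le> L"
    and first: "\<forall>k<L. \<forall>s<d. g 1 k $ s = fb k $ s"
    and tails: "\<forall>i<xi - 1. \<forall>k<L - n. \<forall>s<d. g (2 + i) (n + k) $ s = fb (L + (i * (L - n) + k)) $ s"
    and overlaps: "\<forall>i\<in>{1..xi - 1}. \<forall>k<n. \<forall>s<d. g i (L - n + k) $ s = g (i + 1) k $ s"
  shows "\<forall>i\<in>{1..xi}. \<forall>k<L. \<forall>s<d. fb ((i - 1) * (L - n) + k) $ s = g i k $ s"
proof -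
  obtain q where q: "L = n + q" using Ln le_Suc_ex by blast
  have shifted: "\<forall>k<L. \<forall>s<d. fb (i * (L - n) + k) $ s = g (Suc i) k $ s" if "Suc i \<le> xi" for i
    using that
  proof (induction i)
    case 0 then show ?case using first by simp
  next
    case (Suc i)
    show ?case
    proof (intro allI impI)
      fix k s assume k: "k < L" and s: "s < d"
      show "fb (Suc i * (L - n) + k) $ s = g (Suc (Suc i)) k $ s"
      proof (cases "n \<le> k")
        case True
        hence "Suc i * (L - n) + k = L + (i * (L - n) + (k - n))" using q by simp
        moreover have "k - n < L - n" "n + (k - n) = k" using True k by auto
        moreover have "i < xi - 1" using Suc.prems by simp
        ultimately show ?thesis using tails s by (metis add_2_eq_Suc)
      next
        case False
        hence "L - n + k < L" using Ln by simp
        hence "fb (i * (L - n) + (L - n + k)) $ s = g (Suc i) (L - n + k) $ s"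
          using Suc s by simp
        also have "\<dots> = g (Suc (Suc i)) k $ s" using overlaps Suc.prems False s by simp
        finally show ?thesis by (simp add: add_ac)
      qed
    qed
  qed
  show ?thesis
  proof (intro ballI allI impI)
    fix i k s assume i: "i \<in> {1..xi}" and "k < L" "s < d"
    moreover obtain i' where "i = Suc i'" using i by (cases i) auto
    ultimately show "fb ((i - 1) * (L - n) + k) $ s = g i k $ s" using shifted[of i'] by simp
  qed
qed

lemma first_window_tails_overlaps_of_windows:
  fixes g :: "nat \<Rightarrow> nat \<Rightarrow> real vec" and fb :: "nat \<Rightarrow> real vec"
  assumes Ln: "n \<le> L" and xi1: "1 \<le> xi"
    and W: "\<forall>i\<in>{1..xi}. \<forall>k<L. \<forall>s<d. fb ((i - 1) * (L - n) + k) $ s = g i k $ s"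
  shows "(\<forall>k<L. \<forall>s<d. g 1 k $ s = fb k $ s)
    \<and> (\<forall>i<xi - 1. \<forall>k<L - n. \<forall>s<d. g (2 + i) (n + k) $ s = fb (L + (i * (L - n) + k)) $ s)
    \<and> (\<forall>i\<in>{1..xi - 1}. \<forall>k<n. \<forall>s<d. g i (L - n + k) $ s = g (i + 1) k $ s)"
proof (intro conjI allI impI ballI)
  fix k s assume "k < L" "s < d"
  thus "g 1 k $ s = fb k $ s" using W[rule_format, of 1 k s] xi1 by simp
next
  fix i k s assume i: "i < xi - 1" and k: "k < L - n" and s: "s < d"
  obtain q where "L = n + q" using Ln le_Suc_ex by blast
  hence "(2 + i - 1) * (L - n) + (n + k) = L + (i * (L - n) + k)" by simp
  thus "g (2 + i) (n + k) $ s = fb (L + (i * (L - n) + k)) $ s"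
    using W[rule_format, of "2 + i" "n + k" s] i k s by simp
next
  fix i k s assume i: "i \<in> {1..xi - 1}" and k: "k < n" and s: "s < d"
  obtain q where "L = n + q" using Ln le_Suc_ex by blast
  hence eq: "(i - 1) * (L - n) + (L - n + k) = (i + 1 - 1) * (L - n) + k"
    using i by (cases i) auto
  have "L - n + k < L" "k < L" "i \<in> {1..xi}" "i + 1 \<in> {1..xi}" using i k Ln by auto
  hence "fb ((i - 1) * (L - n) + (L - n + k)) $ s = g i (L - n + k) $ s"
    "fb ((i + 1 - 1) * (L - n) + k) $ s = g (i + 1) k $ s"
    using W s by blast+
  thus "g i (L - n + k) $ s = g (i + 1) k $ s" unfolding eq by simp
qed

lemma block_hankel_conditions_iff_windows_match:
  assumes xi1: "1 \<le> xi" and Ln: "n \<le> L" and NL: "L + n \<le> N" and L1: "1 \<le> L"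
    and ac: "\<forall>i\<in>{1..xi}. \<alpha> i \<in> carrier_vec (N - L + 1)"
    and fbc: "\<forall>t < L + (xi - 1) * (L - n). fb t \<in> carrier_vec d"
  shows "(block_hankel d L n N xi f *\<^sub>v stack_vecs \<alpha> xi = stack d fb 0 (L + (xi - 1) * (L - n) - 1) \<and>
      (\<forall>i\<in>{1..xi - 1}. hankel d n (N - L + n) (subseq f (L - n)) *\<^sub>v \<alpha> i
                        = hankel d n (N - L + n) f *\<^sub>v \<alpha> (i + 1)))
    \<longleftrightarrow> windows_match d L n xi (N - L + 1) \<alpha> f fb"
proof -
  let ?g = "\<lambda>i k. hankel_comb d (N - L + 1) (\<alpha> i) f k"
  have "(\<forall>i\<in>{1..xi - 1}. hankel d n (N - L + n) (subseq f (L - n)) *\<^sub>v \<alpha> i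
                        = hankel d n (N - L + n) f *\<^sub>v \<alpha> (i + 1))
     \<longleftrightarrow> (\<forall>i\<in>{1..xi - 1}. \<forall>k<n. \<forall>s<d. ?g i (L - n + k) $ s = ?g (i + 1) k $ s)"
    using ac by (intro ball_cong refl overlap_hankel_eq_iff) auto
  moreover have "windows_match d L n xi (N - L + 1) \<alpha> f fb
     \<longleftrightarrow> (\<forall>i\<in>{1..xi}. \<forall>k<L. \<forall>s<d. fb ((i - 1) * (L - n) + k) $ s = ?g i k $ s)"
  proof -
    have "fb ((i - 1) * (L - n) + k) \<in> carrier_vec d" if "i \<in> {1..xi}" "k < L" for i k
    proof -
      have "(i - 1) * (L - n) \<le> (xi - 1) * (L - n)" using that by (intro mult_le_mono1) auto
      hence "(i - 1) * (L - n) + k < L + (xi - 1) * (L - n)" using that by linarith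
      thus ?thesis using fbc by blast
    qed
    thus ?thesis unfolding windows_match_def by (auto simp: vec_eq_iff)
  qed
  ultimately show ?thesis
    unfolding block_hankel_mult_eq_stack_iff[OF xi1 Ln NL L1 ac]
    using windows_of_first_window_tails_overlaps[OF Ln, where g = ?g and fb = fb and d = d and xi = xi]
      first_window_tails_overlaps_of_windows[OF Ln xi1, where g = ?g and fb = fb and d = d]
    by blast
qed

lemma vstack_vstack_mult:
  fixes X Y Z :: "real mat"
  assumes "dim_col Y = dim_col X" "dim_col Z = dim_col X" and v: "v \<in> carrier_vec (dim_col X)"
  shows "vstack (vstack X Y) Z *\<^sub>v v = (X *\<^sub>v v) @\<^sub>v (vstack Y Z *\<^sub>v v)"
  using assms by (simp add: vstack_mult dim_vstack append_vec_assoc)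

lemma data_matrix_conditions_iff_windows_match:
  fixes u y ubar ybar :: "nat \<Rightarrow> real vec"
  assumes xi1: "1 \<le> xi" and LgE: "n \<le> L" and NL: "L + n \<le> N" and L1: "1 \<le> L"
    and ac: "\<forall>i\<in>{1..xi}. \<alpha> i \<in> carrier_vec (N - L + 1)"
    and ubc: "\<forall>t < L + (xi - 1) * (L - n). ubar t \<in> carrier_vec m"
    and ybc: "\<forall>t < L + (xi - 1) * (L - n). ybar t \<in> carrier_vec p"
  shows "(vstack (vstack (block_hankel m L n N xi u) (bdiag (hankel p L N y) (0\<^sub>m 0 ((xi - 1) * (N - L + 1)))))
         (bdiag (0\<^sub>m 0 (N - L + 1)) (kron_id (xi - 1) (hankel p (L - n) (N - n) (subseq y n))))
       *\<^sub>v stack_vecs \<alpha> xi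
       = stack m ubar 0 (L + (xi - 1) * (L - n) - 1) @\<^sub>v stack p ybar 0 (L + (xi - 1) * (L - n) - 1) \<and>
       (\<forall>i\<in>{1..xi - 1}.
          hankel m n (N - L + n) (subseq u (L - n)) *\<^sub>v \<alpha> i = hankel m n (N - L + n) u *\<^sub>v \<alpha> (i + 1) \<and>
          hankel p n (N - L + n) (subseq y (L - n)) *\<^sub>v \<alpha> i = hankel p n (N - L + n) y *\<^sub>v \<alpha> (i + 1)))
     \<longleftrightarrow> windows_match m L n xi (N - L + 1) \<alpha> u ubar \<and> windows_match p L n xi (N - L + 1) \<alpha> y ybar"
proof -
  let ?S = "stack_vecs \<alpha> xi"
  let ?su = "stack m ubar 0 (L + (xi - 1) * (L - n) - 1)" and ?sy = "stack p ybar 0 (L + (xi - 1) * (L - n) - 1)"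
  have mult: "vstack (vstack (block_hankel m L n N xi u) (bdiag (hankel p L N y) (0\<^sub>m 0 ((xi - 1) * (N - L + 1)))))
       (bdiag (0\<^sub>m 0 (N - L + 1)) (kron_id (xi - 1) (hankel p (L - n) (N - n) (subseq y n)))) *\<^sub>v ?S
     = (block_hankel m L n N xi u *\<^sub>v ?S) @\<^sub>v (block_hankel p L n N xi y *\<^sub>v ?S)"
  proof (rule vstack_vstack_mult)
    obtain k where k: "xi = Suc k" using xi1 by (cases xi) auto
    have "N - n - (L - n) = N - L" using LgE by simp
    thus "dim_col (bdiag (hankel p L N y) (0\<^sub>m 0 ((xi - 1) * (N - L + 1))))
        = dim_col (block_hankel m L n N xi u)"
      and "dim_col (bdiag (0\<^sub>m 0 (N - L + 1)) (kron_id (xi - 1) (hankel p (L - n) (N - n) (subseq y n))))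
        = dim_col (block_hankel m L n N xi u)"
      unfolding dim_block_hankel(1)[OF LgE xi1] using k by (simp_all add: dim_bdiag dim_kron_id hankel_def)
    show "?S \<in> carrier_vec (dim_col (block_hankel m L n N xi u))"
      unfolding dim_block_hankel(1)[OF LgE xi1] by (rule stack_vecs_carrier[OF ac])
  qed
  have split: "(block_hankel m L n N xi u *\<^sub>v ?S) @\<^sub>v (block_hankel p L n N xi y *\<^sub>v ?S) = ?su @\<^sub>v ?sy
    \<longleftrightarrow> block_hankel m L n N xi u *\<^sub>v ?S = ?su \<and> block_hankel p L n N xi y *\<^sub>v ?S = ?sy"
  proof (rule append_vec_eq)
    show "block_hankel m L n N xi u *\<^sub>v ?S \<in> carrier_vec (m * (L + (xi - 1) * (L - n)))"
      using dim_block_hankel(2)[OF LgE xi1, where d = m and f = u] by (intro carrier_vecI) simp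
    show "?su \<in> carrier_vec (m * (L + (xi - 1) * (L - n)))" using L1 by (simp add: stack_def)
  qed
  show ?thesis
    unfolding mult split ball_conj_distrib
    using block_hankel_conditions_iff_windows_match[OF xi1 LgE NL L1 ac, where d = m and fb = ubar and f = u]
      block_hankel_conditions_iff_windows_match[OF xi1 LgE NL L1 ac, where d = p and fb = ybar and f = y]
      ubc ybc
    by argo
qed

theorem proposition1:
  fixes n m p L xi N :: nat
    and A B C D :: "real mat"
    and u y ubar ybar :: "nat \<Rightarrow> real vec"
  assumes minimal: "minimal_realization n m p A B C D"
    and L1: "L \<ge> 1"
    and LgE: "L \<ge> n"
    and xi1: "xi \<ge> 1"
    and NL: "L + n \<le> N"
    and traj: "is_trajectory n m p A B C D N u y"
    and pe: "persistently_exciting m N u (L + n)"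
    and ubar_dim: "\<forall>k < xi * L - (xi - 1) * n. ubar k \<in> carrier_vec m"
    and ybar_dim: "\<forall>k < xi * L - (xi - 1) * n. ybar k \<in> carrier_vec p"
  shows "is_trajectory n m p A B C D (xi * L - (xi - 1) * n) ubar ybar \<longleftrightarrow>
    (\<exists>\<alpha> :: nat \<Rightarrow> real vec.
       (\<forall>i\<in>{1..xi}. \<alpha> i \<in> carrier_vec (N - L + 1)) \<and>
       vstack
         (vstack
           (vstack
             (bdiag (hankel m L N u) (0\<^sub>m 0 ((xi - 1) * (N - L + 1))))
             (bdiag (0\<^sub>m 0 (N - L + 1)) (kron_id (xi - 1) (hankel m (L - n) (N - n) (subseq u n)))))
           (bdiag (hankel p L N y) (0\<^sub>m 0 ((xi - 1) * (N - L + 1)))))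
         (bdiag (0\<^sub>m 0 (N - L + 1)) (kron_id (xi - 1) (hankel p (L - n) (N - n) (subseq y n))))
       *\<^sub>v stack_vecs \<alpha> xi
       = stack m ubar 0 (xi * L - (xi - 1) * n - 1) @\<^sub>v stack p ybar 0 (xi * L - (xi - 1) * n - 1) \<and>
       (\<forall>i\<in>{1..xi - 1}.
          hankel m n (N - L + n) (subseq u (L - n)) *\<^sub>v \<alpha> i = hankel m n (N - L + n) u *\<^sub>v \<alpha> (i + 1) \<and>
          hankel p n (N - L + n) (subseq y (L - n)) *\<^sub>v \<alpha> i = hankel p n (N - L + n) y *\<^sub>v \<alpha> (i + 1)))"
proof -
  obtain x where "lti_trajectory n m p A B C D N u y x"
    using minimal traj unfolding minimal_realization_def is_trajectory_def lti_trajectory_def by blast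
  then interpret lti_trajectory n m p A B C D N u y x .
  have ctrb: "mrank (ctrb_mat n m A B) = n" and obs: "mrank (obsv_mat n p A C) = n"
    using minimal unfolding minimal_realization_def by auto
  have T: "xi * L - (xi - 1) * n = L + (xi - 1) * (L - n)"
    using xi1 LgE by (cases xi) (auto simp: diff_mult_distrib2)
  have ubc: "\<forall>t < L + (xi - 1) * (L - n). ubar t \<in> carrier_vec m"
    and ybc: "\<forall>t < L + (xi - 1) * (L - n). ybar t \<in> carrier_vec p"
    using ubar_dim ybar_dim unfolding T .
  show ?thesis
    unfolding T trajectory_iff_windows[OF ctrb obs pe NL LgE xi1 refl ubc ybc]
    by (intro ex_cong1 conj_cong[OF refl]
        data_matrix_conditions_iff_windows_match[OF xi1 LgE NL L1 _ ubc ybc, symmetric])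
qed

end
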